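(* The single-machine scheduling problem $1|\text{two chains}|\sum w_jC_j$ can be solved in $O(n)$ time, where $n$ is the number of jobs.
   Context: The problem $1|\text{two chains}|\sum w_jC_j$ is defined as follows. There are $n$ jobs, and job $j$ has processing time $p_j>0$ and weight $w_j\ge 0$. The jobs are partitioned into two chains (linear orders), and within each chain the jobs must be processed in the chain order. A single machine processes one job at a time, without preemption, starting at time $0$. $C_j$ denotes the completion time of job $j$. The goal is to find a feasible sequence of jobs minimizing $\sum_j w_jC_j$. *)

theory Defs
  imports Main "HOL.Real"
begin

text \<open>An instance is given by two chains, each a list of jobs (p_j, w_j) in chain order.
  Jobs are identified as Inl i (i-th job of chain 1) and Inr j (j-th job of chain 2).\<close>

type_synonym job_data = "real \<times> real"   (* (processing time, weight) *)

definition valid_instance :: "job_data list \<Rightarrow> job_data list \<Rightarrow> bool" where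
  "valid_instance c1 c2 \<longleftrightarrow> (\<forall>(p, w) \<in> set (c1 @ c2). p > 0 \<and> w \<ge> 0)"

fun ptime :: "job_data list \<Rightarrow> job_data list \<Rightarrow> nat + nat \<Rightarrow> real" where
  "ptime c1 c2 (Inl i) = fst (c1 ! i)"
| "ptime c1 c2 (Inr j) = fst (c2 ! j)"

fun weight :: "job_data list \<Rightarrow> job_data list \<Rightarrow> nat + nat \<Rightarrow> real" where
  "weight c1 c2 (Inl i) = snd (c1 ! i)"
| "weight c1 c2 (Inr j) = snd (c2 ! j)"

text \<open>Feasible sequences: all orders of the n jobs respecting both chain orders,
  i.e. the interleavings of the two chains.\<close>
definition feasible_seqs :: "job_data list \<Rightarrow> job_data list \<Rightarrow> (nat + nat) list set" where
  "feasible_seqs c1 c2 = shuffles (map Inl [0..<length c1]) (map Inr [0..<length c2])"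

text \<open>Completion time of the k-th job of the sequence (no idle time, start at 0) and the
  objective sum_j w_j C_j.\<close>
definition completion :: "job_data list \<Rightarrow> job_data list \<Rightarrow> (nat + nat) list \<Rightarrow> nat \<Rightarrow> real" where
  "completion c1 c2 \<sigma> k = (\<Sum>l\<le>k. ptime c1 c2 (\<sigma> ! l))"

definition twct :: "job_data list \<Rightarrow> job_data list \<Rightarrow> (nat + nat) list \<Rightarrow> real" where
  "twct c1 c2 \<sigma> = (\<Sum>k<length \<sigma>. weight c1 c2 (\<sigma> ! k) * completion c1 c2 \<sigma> k)"

definition optimal_seq :: "job_data list \<Rightarrow> job_data list \<Rightarrow> (nat + nat) list \<Rightarrow> bool" where
  "optimal_seq c1 c2 \<sigma> \<longleftrightarrow> \<sigma> \<in> feasible_seqs c1 c2 \<and>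
     (\<forall>\<tau> \<in> feasible_seqs c1 c2. twct c1 c2 \<sigma> \<le> twct c1 c2 \<tau>)"

text \<open>Integer registers/memory (indices, with +,-, comparisons) and real registers/memory
  (with +,-,*,/, comparisons), indirect addressing, no conversion from reals to integers
  (no floor). Each executed instruction costs one time unit.\<close>

datatype instr =
    IConst nat int
  | IAdd nat nat nat
  | ISub nat nat nat
  | ILoad nat nat
  | IStore nat nat
  | RConst nat int
  | RAdd nat nat nat
  | RSub nat nat nat
  | RMul nat nat nat
  | RDiv nat nat nat
  | RLoad nat nat
  | RStore nat nat
  | JmpILe nat nat nat
  | JmpRLe nat nat nat
  | Jmp nat
  | Halt

record state =
  pc :: nat
  ireg :: "nat \<Rightarrow> int"
  rreg :: "nat \<Rightarrow> real"
  imem :: "int \<Rightarrow> int"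
  rmem :: "int \<Rightarrow> real"

definition halted :: "instr list \<Rightarrow> state \<Rightarrow> bool" where
  "halted P s \<longleftrightarrow> pc s \<ge> length P \<or> P ! pc s = Halt"

fun exec :: "instr \<Rightarrow> state \<Rightarrow> state" where
  "exec (IConst a c) s = s\<lparr>ireg := (ireg s)(a := c), pc := Suc (pc s)\<rparr>"
| "exec (IAdd a b c) s = s\<lparr>ireg := (ireg s)(a := ireg s b + ireg s c), pc := Suc (pc s)\<rparr>"
| "exec (ISub a b c) s = s\<lparr>ireg := (ireg s)(a := ireg s b - ireg s c), pc := Suc (pc s)\<rparr>"
| "exec (ILoad a b) s = s\<lparr>ireg := (ireg s)(a := imem s (ireg s b)), pc := Suc (pc s)\<rparr>"
| "exec (IStore a b) s = s\<lparr>imem := (imem s)(ireg s b := ireg s a), pc := Suc (pc s)\<rparr>"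
| "exec (RConst a c) s = s\<lparr>rreg := (rreg s)(a := of_int c), pc := Suc (pc s)\<rparr>"
| "exec (RAdd a b c) s = s\<lparr>rreg := (rreg s)(a := rreg s b + rreg s c), pc := Suc (pc s)\<rparr>"
| "exec (RSub a b c) s = s\<lparr>rreg := (rreg s)(a := rreg s b - rreg s c), pc := Suc (pc s)\<rparr>"
| "exec (RMul a b c) s = s\<lparr>rreg := (rreg s)(a := rreg s b * rreg s c), pc := Suc (pc s)\<rparr>"
| "exec (RDiv a b c) s = s\<lparr>rreg := (rreg s)(a := rreg s b / rreg s c), pc := Suc (pc s)\<rparr>"
| "exec (RLoad a b) s = s\<lparr>rreg := (rreg s)(a := rmem s (ireg s b)), pc := Suc (pc s)\<rparr>"
| "exec (RStore a b) s = s\<lparr>rmem := (rmem s)(ireg s b := rreg s a), pc := Suc (pc s)\<rparr>"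
| "exec (JmpILe a b l) s = s\<lparr>pc := (if ireg s a \<le> ireg s b then l else Suc (pc s))\<rparr>"
| "exec (JmpRLe a b l) s = s\<lparr>pc := (if rreg s a \<le> rreg s b then l else Suc (pc s))\<rparr>"
| "exec (Jmp l) s = s\<lparr>pc := l\<rparr>"
| "exec Halt s = s"

definition step :: "instr list \<Rightarrow> state \<Rightarrow> state" where
  "step P s = (if halted P s then s else exec (P ! pc s) s)"

definition run :: "instr list \<Rightarrow> nat \<Rightarrow> state \<Rightarrow> state" where
  "run P t s = (step P ^^ t) s"

text \<open>Input encoding: imem[0] = length of chain 1 (a), imem[1] = length of chain 2 (b);
  job i of chain 1 has p at rmem[2i], w at rmem[2i+1]; job j of chain 2 has
  p at rmem[2(a+j)], w at rmem[2(a+j)+1].\<close>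
definition init_state :: "job_data list \<Rightarrow> job_data list \<Rightarrow> state" where
  "init_state c1 c2 =
    \<lparr> pc = 0, ireg = (\<lambda>_. 0), rreg = (\<lambda>_. 0),
      imem = (\<lambda>x. if x = 0 then int (length c1) else if x = 1 then int (length c2) else 0),
      rmem = (\<lambda>x. if 0 \<le> x \<and> nat x < 2 * length (c1 @ c2)
                  then (if even (nat x) then fst ((c1 @ c2) ! (nat x div 2))
                        else snd ((c1 @ c2) ! (nat x div 2)))
                  else 0) \<rparr>"

text \<open>Output encoding: the k-th job of the computed sequence (k < n) is described by
  imem[2+2k] (0 = chain 1, anything else = chain 2) and imem[3+2k] (index within chain).\<close>
definition output_seq :: "nat \<Rightarrow> state \<Rightarrow> (nat + nat) list" where
  "output_seq n s = map (\<lambda>k. if imem s (2 + 2 * int k) = 0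
                              then Inl (nat (imem s (3 + 2 * int k)))
                              else Inr (nat (imem s (3 + 2 * int k)))) [0..<n]"

definition solves_in_linear_time :: "instr list \<Rightarrow> bool" where
  "solves_in_linear_time P \<longleftrightarrow> (\<exists>c::nat. \<forall>c1 c2. valid_instance c1 c2 \<longrightarrow>
     (let n = length c1 + length c2 in
      \<exists>t \<le> c * n + c. halted P (run P t (init_state c1 c2)) \<and>
        optimal_seq c1 c2 (output_seq n (run P t (init_state c1 c2)))))"

end

theory Submission
  imports Defs "HOL-Library.Sublist"
begin

text \<open>Two chains are scheduled optimally by Sidney's method. Cut each chain into
  blocks, every block being an initial segment of maximal density \<open>w(B) / p(B)\<close>
  of what remains of its chain; the densities then do not increase along the chain. An
  interchange argument shows that a block none of whose prefixes is denser than itself, and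
  which is at least as dense as every prefix of the remaining jobs, may be scheduled first
  without loss. Hence merging the two block sequences by non-increasing density is optimal.
  The blocks of a chain are found with a stack: push each job as a new block, then merge the
  top block into the one below while it is at least as dense. Every merge removes a block,
  so there are fewer merges than jobs, and the whole computation, with densities compared by
  cross-multiplication, takes linear time on the real RAM.\<close>

subsection \<open>Merging Sidney decompositions\<close>

definition total :: "('a \<Rightarrow> real) \<Rightarrow> 'a list \<Rightarrow> real" where
  "total f xs = sum_list (map f xs)"

lemma total_simps [simp]:
  "total f [] = 0"
  "total f (x # xs) = f x + total f xs"
  "total f (xs @ ys) = total f xs + total f ys"
  by (auto simp: total_def)

lemma total_map: "total f (map g xs) = total (f \<circ> g) xs"
  by (simp add: total_def)

lemma total_nonneg: "\<forall>x. p x > 0 \<Longrightarrow> total p xs \<ge> 0"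
  by (induction xs) (auto simp: less_imp_le)

lemma total_pos: "\<forall>x. p x > 0 \<Longrightarrow> xs \<noteq> [] \<Longrightarrow> total p xs > 0"
  by (cases xs) (auto simp: add_pos_nonneg total_nonneg)

lemma total_shuffles: "zs \<in> shuffles xs ys \<Longrightarrow> total f zs = total f xs + total f ys"
  by (induction xs ys arbitrary: zs rule: shuffles.induct) auto

text \<open>\<open>\<Sum> w\<^sub>j C\<^sub>j\<close>, computed by charging the processing time of each job to the
  weight of that job and of all later jobs.\<close>
fun weighted_cost :: "('a \<Rightarrow> real) \<Rightarrow> ('a \<Rightarrow> real) \<Rightarrow> 'a list \<Rightarrow> real" where
  "weighted_cost p w [] = 0"
| "weighted_cost p w (x # xs) = p x * w x + p x * total w xs + weighted_cost p w xs"

lemma weighted_cost_append: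
  "weighted_cost p w (xs @ ys)
    = weighted_cost p w xs + weighted_cost p w ys + total p xs * total w ys"
  by (induction xs) (auto simp: algebra_simps)

lemma weighted_cost_eq_sum:
  "weighted_cost p w xs = (\<Sum>k<length xs. w (xs ! k) * (\<Sum>l\<le>k. p (xs ! l)))"
proof (induction xs rule: rev_induct)
  case Nil
  then show ?case by simp
next
  case (snoc x xs)
  have prefix_sum: "(\<Sum>l\<le>length xs. p ((xs @ [x]) ! l)) = total p xs + p x"
  proof -
    have "(\<Sum>l\<le>length xs. p ((xs @ [x]) ! l)) = (\<Sum>l<length xs. p (xs ! l)) + p x"
      by (simp add: lessThan_Suc_atMost[symmetric] nth_append)
    also have "(\<Sum>l<length xs. p (xs ! l)) = total p xs"
      by (simp add: total_def sum_list_sum_nth atLeast0LessThan)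
    finally show ?thesis .
  qed
  have "(\<Sum>k<length xs. w ((xs @ [x]) ! k) * (\<Sum>l\<le>k. p ((xs @ [x]) ! l)))
          = (\<Sum>k<length xs. w (xs ! k) * (\<Sum>l\<le>k. p (xs ! l)))"
    by (intro sum.cong refl) (simp add: nth_append)
  then show ?case
    using snoc prefix_sum by (simp add: weighted_cost_append algebra_simps)
qed

text \<open>\<open>density p w xs\<close> is Sidney's ratio \<open>w(xs) / p(xs)\<close>; \<open>excess p w r xs \<le> 0\<close> says that
  \<open>xs\<close> has density at most \<open>r\<close>, without dividing.\<close>
definition excess :: "('a \<Rightarrow> real) \<Rightarrow> ('a \<Rightarrow> real) \<Rightarrow> real \<Rightarrow> 'a list \<Rightarrow> real" where
  "excess p w r xs = total w xs - r * total p xs"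

definition density :: "('a \<Rightarrow> real) \<Rightarrow> ('a \<Rightarrow> real) \<Rightarrow> 'a list \<Rightarrow> real" where
  "density p w xs = total w xs / total p xs"

lemma excess_simps [simp]:
  "excess p w r [] = 0" "excess p w r (x # ys) = (w x - r * p x) + excess p w r ys"
  "excess p w r (xs @ ys) = excess p w r xs + excess p w r ys"
  by (auto simp: excess_def algebra_simps)

lemma excess_map: "excess p w r (map g xs) = excess (p \<circ> g) (w \<circ> g) r xs"
  by (simp add: excess_def total_map)

lemma density_map: "density p w (map g xs) = density (p \<circ> g) (w \<circ> g) xs"
  by (simp add: density_def total_map)

context
  fixes p :: "'a \<Rightarrow> real"
  assumes p_pos: "\<forall>x. p x > 0"
begin

lemma excess_eq_density_diff:
  assumes "xs \<noteq> []"
  shows "excess p w r xs = (density p w xs - r) * total p xs"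
proof -
  have "total p xs > 0" using total_pos[OF p_pos assms] .
  then show ?thesis by (simp add: excess_def density_def algebra_simps)
qed

lemma excess_density_self: "xs \<noteq> [] \<Longrightarrow> excess p w (density p w xs) xs = 0"
  using excess_eq_density_diff by simp

lemma excess_antimono: "r \<le> r' \<Longrightarrow> excess p w r' xs \<le> excess p w r xs"
  using total_nonneg[OF p_pos, of xs] by (simp add: excess_def mult_right_mono)

lemma excess_nonpos_mono: "r \<le> r' \<Longrightarrow> excess p w r xs \<le> 0 \<Longrightarrow> excess p w r' xs \<le> 0"
  using excess_antimono[of r r' w xs] by simp

lemma cross_le_iff_density_le:
  "a \<noteq> [] \<Longrightarrow> b \<noteq> [] \<Longrightarrow>
    (total w b * total p a \<le> total w a * total p b) = (density p w b \<le> density p w a)"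
  using total_pos[OF p_pos, of a] total_pos[OF p_pos, of b]
  by (simp add: density_def divide_simps mult.commute)

text \<open>The interchange argument, generalised for the induction: \<open>c\<close> is the excess of the
  part of \<open>Y\<close> that the jobs of \<open>a\<close> have already overtaken.\<close>
lemma weighted_cost_shuffle_ge:
  assumes "s \<in> shuffles a Y"
    and "\<And>\<tau>. suffix \<tau> a \<Longrightarrow> excess p w r \<tau> \<ge> 0"
    and "\<And>\<pi>. prefix \<pi> Y \<Longrightarrow> c + excess p w r \<pi> \<le> 0"
  shows "weighted_cost p w s - weighted_cost p w (a @ Y) \<ge> c * total p a"
  using assms
proof (induction s arbitrary: a Y c)
  case Nil
  then show ?case by simp
next
  case (Cons z s)
  have c_nonpos: "c \<le> 0" using Cons.prems(3)[of "[]"] by simp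
  from Cons.prems(1) consider
    (left) a' where "a = z # a'" "s \<in> shuffles a' Y"
  | (right) Y' where "Y = z # Y'" "s \<in> shuffles a Y'"
    by (cases a; cases Y) (auto simp: Cons_in_shuffles_iff)
  then show ?case
  proof cases
    case left
    have IH: "weighted_cost p w s - weighted_cost p w (a' @ Y) \<ge> c * total p a'"
      using Cons.IH[of a' Y c] Cons.prems left by (auto intro: suffix_ConsI)
    have "c * p z \<le> 0"
      using c_nonpos p_pos[rule_format, of z] by (simp add: mult_nonpos_nonneg less_imp_le)
    then show ?thesis using IH left total_shuffles[OF left(2)] by (simp add: algebra_simps)
  next
    case right
    have "\<And>\<pi>. prefix \<pi> Y' \<Longrightarrow> (c + (w z - r * p z)) + excess p w r \<pi> \<le> 0"
      using Cons.prems(3)[of "z # _"] right(1) by (simp add: add.assoc)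
    then have IH:
      "weighted_cost p w s - weighted_cost p w (a @ Y') \<ge> (c + (w z - r * p z)) * total p a"
      using Cons.IH[of a Y'] Cons.prems(2) right(2) by blast
    have "p z * excess p w r a \<ge> 0" using Cons.prems(2)[of a] p_pos[rule_format, of z] by simp
    then show ?thesis
      using IH right total_shuffles[OF right(2)]
      by (simp add: algebra_simps weighted_cost_append excess_def)
  qed
qed

lemma weighted_cost_block_first:
  assumes "s \<in> shuffles a Y" "a \<noteq> []"
    and "\<And>\<pi>. prefix \<pi> a \<Longrightarrow> excess p w (density p w a) \<pi> \<le> 0"
    and "\<And>\<pi>. prefix \<pi> Y \<Longrightarrow> excess p w (density p w a) \<pi> \<le> 0"
  shows "weighted_cost p w (a @ Y) \<le> weighted_cost p w s"
proof -
  have "excess p w (density p w a) \<tau> \<ge> 0" if "suffix \<tau> a" for \<tau>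
  proof -
    from that obtain \<pi> where a: "a = \<pi> @ \<tau>" by (auto simp: suffix_def)
    then have "excess p w (density p w a) \<pi> \<le> 0" using assms(3) by auto
    moreover have "excess p w (density p w a) a = 0" using excess_density_self assms(2) by blast
    ultimately show ?thesis using a by simp
  qed
  from weighted_cost_shuffle_ge[OF assms(1) this, of 0] assms(4) show ?thesis by simp
qed

end

lemma shuffles_append_split:
  "\<sigma> \<in> shuffles (xs @ xs') ys \<Longrightarrow>
    \<exists>ys1 ys2 s r. ys = ys1 @ ys2 \<and> \<sigma> = s @ r \<and> s \<in> shuffles xs ys1 \<and> r \<in> shuffles xs' ys2"
proof (induction \<sigma> arbitrary: xs ys)
  case Nil
  then show ?case by auto
next
  case (Cons z zs)
  show ?case
  proof (cases xs)
    case Nil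
    then show ?thesis
      using Cons.prems by (intro exI[of _ "[]"] exI[of _ ys] exI[of _ "[]"] exI[of _ "z # zs"]) auto
  next
    case (Cons x xs1)
    from Cons.prems consider
      (left) "x = z" "zs \<in> shuffles (xs1 @ xs') ys"
    | (right) ys' where "ys = z # ys'" "zs \<in> shuffles (xs @ xs') ys'"
      using Cons by (cases ys) (auto simp: Cons_in_shuffles_iff)
    then show ?thesis
    proof cases
      case left
      from Cons.IH[OF left(2)] obtain ys1 ys2 s r where
        "ys = ys1 @ ys2" "zs = s @ r" "s \<in> shuffles xs1 ys1" "r \<in> shuffles xs' ys2" by blast
      then show ?thesis using left Cons
        by (intro exI[of _ ys1] exI[of _ ys2] exI[of _ "z # s"] exI[of _ r])
           (auto intro: Cons_in_shuffles_leftI)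
    next
      case right
      from Cons.IH[OF right(2)] obtain ys1 ys2 s r where
        "ys' = ys1 @ ys2" "zs = s @ r" "s \<in> shuffles xs ys1" "r \<in> shuffles xs' ys2" by blast
      then show ?thesis using right
        by (intro exI[of _ "z # ys1"] exI[of _ ys2] exI[of _ "z # s"] exI[of _ r])
           (auto intro: Cons_in_shuffles_rightI)
    qed
  qed
qed

lemma append_in_shuffles_left: "r \<in> shuffles A B \<Longrightarrow> Y @ r \<in> shuffles (Y @ A) B"
  by (induction Y) (auto intro: Cons_in_shuffles_leftI)

lemma append_in_shuffles_right: "r \<in> shuffles A B \<Longrightarrow> Y @ r \<in> shuffles A (Y @ B)"
  by (induction Y) (auto intro: Cons_in_shuffles_rightI)

lemma nth_eq_upt_if_concat_eq_upt:
  assumes "concat bs = [0..<n]" "k < length bs"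
  shows "bs ! k = [length (concat (take k bs)) ..< length (concat (take (Suc k) bs))]"
proof -
  define X where "X = concat (take k bs)"
  have "bs = take k bs @ bs ! k # drop (Suc k) bs" using id_take_nth_drop[OF assms(2)] .
  then have split: "[0..<n] = X @ bs ! k @ concat (drop (Suc k) bs)"
    using assms(1) unfolding X_def by (metis concat.simps(2) concat_append)
  have "take (length X + length (bs ! k)) [0..<n] = X @ bs ! k" using split
    by (metis append.assoc append_eq_conv_conj length_append)
  moreover have "drop (length X) (take (length X + length (bs ! k)) [0..<n]) = bs ! k"
    using calculation by simp
  moreover have "length X + length (bs ! k) \<le> n" using split
    by (metis le_add1 length_append length_upt minus_nat.diff_0 add.assoc)
  ultimately have "bs ! k = [length X ..< length X + length (bs ! k)]"
    by (metis drop_take take_upt drop_upt add_0 min.absorb1 le_add1 add_diff_cancel_left' min_def)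
  moreover have "length (concat (take (Suc k) bs)) = length X + length (bs ! k)"
    using assms(2) unfolding X_def by (simp add: take_Suc_conv_app_nth)
  ultimately show ?thesis unfolding X_def by simp
qed

lemma drop_eq_append_imp_drop: "drop n xs = ys @ zs \<Longrightarrow> drop (n + length ys) xs = zs"
  by (metis append_eq_conv_conj drop_drop add.commute)

lemma drop_eq_append_imp_nth:
  assumes "drop n xs = ys @ zs" "i < length ys"
  shows "xs ! (n + i) = ys ! i"
proof -
  have "n \<le> length xs"
    using assms by (metis drop_eq_Nil2 Nil_is_append_conv length_0_conv not_less0 nle_le)
  then show ?thesis using assms by (metis nth_append nth_drop)
qed

lemma weighted_cost_block_first_merge:
  assumes p_pos: "\<forall>x. p x > 0" and a: "a \<noteq> []"
    and a_max: "\<And>\<pi>. prefix \<pi> (a @ A) \<Longrightarrow> excess p w (density p w a) \<pi> \<le> 0"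
    and B: "\<And>\<pi>. prefix \<pi> B \<Longrightarrow> excess p w (density p w a) \<pi> \<le> 0"
    and M: "\<And>\<sigma>'. \<sigma>' \<in> shuffles A B \<Longrightarrow> weighted_cost p w M \<le> weighted_cost p w \<sigma>'"
      "total w M = total w A + total w B"
    and \<sigma>: "\<sigma> \<in> shuffles (a @ A) B"
  shows "weighted_cost p w (a @ M) \<le> weighted_cost p w \<sigma>"
proof -
  from shuffles_append_split[OF \<sigma>] obtain Y B' s r where
    split: "B = Y @ B'" "\<sigma> = s @ r" "s \<in> shuffles a Y" "r \<in> shuffles A B'" by blast
  have "\<And>\<pi>. prefix \<pi> a \<Longrightarrow> excess p w (density p w a) \<pi> \<le> 0"
    using a_max by (metis prefix_append)
  moreover have "\<And>\<pi>. prefix \<pi> Y \<Longrightarrow> excess p w (density p w a) \<pi> \<le> 0"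
    using B split(1) by (metis prefix_append)
  ultimately have "weighted_cost p w (a @ Y) \<le> weighted_cost p w s"
    using weighted_cost_block_first[OF p_pos split(3) a] by blast
  moreover have "total p s = total p a + total p Y" using split(3) total_shuffles by blast
  ultimately have "weighted_cost p w (a @ Y @ r) \<le> weighted_cost p w \<sigma>"
    using split(2) weighted_cost_append[of p w "a @ Y" r] weighted_cost_append[of p w s r] by simp
  moreover have "Y @ r \<in> shuffles A B" using append_in_shuffles_right[OF split(4)] split(1) by simp
  then have "weighted_cost p w M \<le> weighted_cost p w (Y @ r)" "total w M = total w (Y @ r)"
    using M total_shuffles[of "Y @ r" A B] by simp_all
  then have "weighted_cost p w (a @ M) \<le> weighted_cost p w (a @ Y @ r)"
    using weighted_cost_append[of p w a M] weighted_cost_append[of p w a "Y @ r"] by simp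
  ultimately show ?thesis by linarith
qed

fun is_sidney_decomp :: "('a \<Rightarrow> real) \<Rightarrow> ('a \<Rightarrow> real) \<Rightarrow> 'a list list \<Rightarrow> bool" where
  "is_sidney_decomp p w [] = True"
| "is_sidney_decomp p w (b # bs) \<longleftrightarrow> b \<noteq> [] \<and>
     (\<forall>\<pi>. prefix \<pi> (concat (b # bs)) \<longrightarrow> excess p w (density p w b) \<pi> \<le> 0) \<and>
     is_sidney_decomp p w bs"

lemma is_sidney_decomp_map:
  "is_sidney_decomp (p \<circ> g) (w \<circ> g) bs \<Longrightarrow> is_sidney_decomp p w (map (map g) bs)"
proof (induction bs)
  case (Cons b bs)
  have "excess p w (density p w (map g b)) \<pi> \<le> 0"
    if "prefix \<pi> (concat (map (map g) (b # bs)))" for \<pi>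
  proof -
    from that have "prefix \<pi> (map g (concat (b # bs)))" by (simp add: map_concat)
    then obtain \<pi>' where "prefix \<pi>' (concat (b # bs))" "\<pi> = map g \<pi>'"
      using prefix_map_rightE by blast
    then show ?thesis using Cons.prems by (simp add: excess_map density_map comp_def)
  qed
  then show ?case using Cons by simp
qed simp

text \<open>Densities are compared by cross-multiplication, as on the machine.\<close>
fun merge_blocks :: "('a \<Rightarrow> real) \<Rightarrow> ('a \<Rightarrow> real) \<Rightarrow> 'a list list \<Rightarrow> 'a list list \<Rightarrow> 'a list" where
  "merge_blocks p w [] bs = concat bs"
| "merge_blocks p w as [] = concat as"
| "merge_blocks p w (a # as) (b # bs) =
    (if total w b * total p a \<le> total w a * total p b
     then a @ merge_blocks p w as (b # bs) else b @ merge_blocks p w (a # as) bs)"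

lemma merge_blocks_Nil2 [simp]: "merge_blocks p w as [] = concat as"
  by (cases as) auto

lemma total_merge_blocks:
  "total f (merge_blocks p w as bs) = total f (concat as) + total f (concat bs)"
  by (induction p w as bs rule: merge_blocks.induct) auto

lemma merge_blocks_in_shuffles: "merge_blocks p w as bs \<in> shuffles (concat as) (concat bs)"
proof (induction p w as bs rule: merge_blocks.induct)
  case (3 p w a as b bs)
  then show ?case
    by (cases "total w b * total p a \<le> total w a * total p b")
       (auto intro: append_in_shuffles_left append_in_shuffles_right)
qed auto

theorem merge_blocks_optimal:
  assumes "\<forall>x. p x > 0" "is_sidney_decomp p w as" "is_sidney_decomp p w bs"
    and "\<sigma> \<in> shuffles (concat as) (concat bs)"
  shows "weighted_cost p w (merge_blocks p w as bs) \<le> weighted_cost p w \<sigma>"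
  using assms
proof (induction p w as bs arbitrary: \<sigma> rule: merge_blocks.induct)
  case (3 p w a as b bs)
  note p_pos = "3.prems"(1)
  have a: "a \<noteq> []" "\<And>\<pi>. prefix \<pi> (a @ concat as) \<Longrightarrow> excess p w (density p w a) \<pi> \<le> 0"
    using "3.prems"(2) by auto
  have b: "b \<noteq> []" "\<And>\<pi>. prefix \<pi> (b @ concat bs) \<Longrightarrow> excess p w (density p w b) \<pi> \<le> 0"
    using "3.prems"(3) by auto
  show ?case
  proof (cases "total w b * total p a \<le> total w a * total p b")
    case True
    then have "density p w b \<le> density p w a"
      using cross_le_iff_density_le[OF p_pos a(1) b(1)] by blast
    then have B: "\<And>\<pi>. prefix \<pi> (b @ concat bs) \<Longrightarrow> excess p w (density p w a) \<pi> \<le> 0"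
      using b(2) excess_nonpos_mono[OF p_pos] by blast
    have M: "\<And>\<sigma>'. \<sigma>' \<in> shuffles (concat as) (b @ concat bs) \<Longrightarrow>
        weighted_cost p w (merge_blocks p w as (b # bs)) \<le> weighted_cost p w \<sigma>'"
      using "3.IH"(1)[OF True p_pos] "3.prems"(2,3) by simp
    have "total w (merge_blocks p w as (b # bs)) = total w (concat as) + total w (b @ concat bs)"
      by (simp add: total_merge_blocks)
    from weighted_cost_block_first_merge[OF p_pos a B M this] show ?thesis
      using "3.prems"(4) True by simp
  next
    case False
    then have "density p w a \<le> density p w b"
      using cross_le_iff_density_le[OF p_pos a(1) b(1), of w] by linarith
    then have A: "\<And>\<pi>. prefix \<pi> (a @ concat as) \<Longrightarrow> excess p w (density p w b) \<pi> \<le> 0"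
      using a(2) excess_nonpos_mono[OF p_pos] by blast
    have M: "\<And>\<sigma>'. \<sigma>' \<in> shuffles (concat bs) (a @ concat as) \<Longrightarrow>
        weighted_cost p w (merge_blocks p w (a # as) bs) \<le> weighted_cost p w \<sigma>'"
      using "3.IH"(2)[OF False p_pos] "3.prems"(2,3) by (simp add: shuffles_commutes)
    have "total w (merge_blocks p w (a # as) bs) = total w (concat bs) + total w (a @ concat as)"
      by (simp add: total_merge_blocks)
    from weighted_cost_block_first_merge[OF p_pos b A M this] show ?thesis
      using "3.prems"(4) False by (simp add: shuffles_commutes)
  qed
qed auto

subsection \<open>Sidney decomposition of a chain by a stack\<close>

definition max_density_block :: "('a \<Rightarrow> real) \<Rightarrow> ('a \<Rightarrow> real) \<Rightarrow> 'a list \<Rightarrow> bool" where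
  "max_density_block p w b \<longleftrightarrow> b \<noteq> [] \<and> (\<forall>\<pi>. prefix \<pi> b \<longrightarrow> excess p w (density p w b) \<pi> \<le> 0)"

context
  fixes p :: "'a \<Rightarrow> real"
  assumes p_pos: "\<forall>x. p x > 0"
begin

text \<open>The density of \<open>b\<^sub>2 @ b\<^sub>1\<close> lies between those of \<open>b\<^sub>1\<close> and \<open>b\<^sub>2\<close>, which is why a
  block may absorb its successor when that successor is at least as dense.\<close>
lemma max_density_block_append:
  assumes b1: "max_density_block p w b1" and b2: "max_density_block p w b2"
    and le: "density p w b2 \<le> density p w b1"
  shows "max_density_block p w (b2 @ b1)"
proof -
  let ?r = "density p w (b2 @ b1)"
  have ne: "b1 \<noteq> []" "b2 \<noteq> []" using b1 b2 by (auto simp: max_density_block_def)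
  have pos: "total p b1 > 0" "total p b2 > 0" using total_pos[OF p_pos] ne by auto
  have sum0: "excess p w ?r b2 + excess p w ?r b1 = 0"
    using excess_density_self[OF p_pos, of "b2 @ b1" w] ne by simp
  have e1: "excess p w ?r b1 = (density p w b1 - ?r) * total p b1"
    using excess_eq_density_diff[OF p_pos ne(1)] .
  have e2: "excess p w ?r b2 = (density p w b2 - ?r) * total p b2"
    using excess_eq_density_diff[OF p_pos ne(2)] .
  have r1: "density p w b2 \<le> ?r"
  proof (rule ccontr)
    assume "\<not> ?thesis"
    then have "(density p w b2 - ?r) * total p b2 > 0" "(density p w b1 - ?r) * total p b1 > 0"
      using pos le by auto
    then show False using sum0 e1 e2 by linarith
  qed
  have r2: "?r \<le> density p w b1"
  proof (rule ccontr)
    assume "\<not> ?thesis"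
    then have "(density p w b2 - ?r) * total p b2 < 0" "(density p w b1 - ?r) * total p b1 < 0"
      using pos le by (auto simp: mult_neg_pos)
    then show False using sum0 e1 e2 by linarith
  qed
  have "excess p w ?r \<pi> \<le> 0" if "prefix \<pi> (b2 @ b1)" for \<pi>
  proof -
    from that consider "prefix \<pi> b2" | us where "\<pi> = b2 @ us" "prefix us b1"
      by (auto simp: prefix_append)
    then show ?thesis
    proof cases
      case 1
      then have "excess p w (density p w b2) \<pi> \<le> 0" using b2 by (auto simp: max_density_block_def)
      then show ?thesis using excess_nonpos_mono[OF p_pos r1] by blast
    next
      case 2
      then obtain \<tau> where split: "b1 = us @ \<tau>" by (auto simp: prefix_def)
      have "excess p w (density p w b1) us \<le> 0" using b1 2 by (auto simp: max_density_block_def)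
      moreover have "excess p w (density p w b1) b1 = 0" using excess_density_self[OF p_pos ne(1)] .
      ultimately have "excess p w (density p w b1) \<tau> \<ge> 0" using split by simp
      moreover have "excess p w (density p w b1) \<tau> \<le> excess p w ?r \<tau>"
        using excess_antimono[OF p_pos r2] .
      moreover have "excess p w ?r (b2 @ b1) = 0"
        using excess_density_self[OF p_pos, of "b2 @ b1" w] ne by simp
      ultimately show ?thesis using 2 split by simp
    qed
  qed
  then show ?thesis using ne by (auto simp: max_density_block_def)
qed

lemma excess_prefix_concat_nonpos:
  assumes "\<And>c. c \<in> set bs \<Longrightarrow> max_density_block p w c \<and> density p w c \<le> r"
    and "prefix \<pi> (concat bs)"
  shows "excess p w r \<pi> \<le> 0"
  using assms
proof (induction bs arbitrary: \<pi>)
  case (Cons c cs)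
  have c: "max_density_block p w c" "density p w c \<le> r" using Cons.prems(1) by auto
  from Cons.prems(2) consider "prefix \<pi> c" | us where "\<pi> = c @ us" "prefix us (concat cs)"
    by (auto simp: prefix_append)
  then show ?case
  proof cases
    case 1
    then have "excess p w (density p w c) \<pi> \<le> 0" using c by (auto simp: max_density_block_def)
    then show ?thesis using excess_nonpos_mono[OF p_pos c(2)] by blast
  next
    case 2
    have "excess p w (density p w c) c = 0"
      using excess_density_self[OF p_pos] c by (auto simp: max_density_block_def)
    then have "excess p w r c \<le> 0" using excess_antimono[OF p_pos c(2), of w c] by simp
    moreover have "excess p w r us \<le> 0" using Cons.IH[OF _ 2(2)] Cons.prems(1) by auto
    ultimately show ?thesis using 2 by simp
  qed
qed simp

lemma is_sidney_decomp_if_sorted: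
  assumes "\<And>b. b \<in> set bs \<Longrightarrow> max_density_block p w b"
    and "sorted_wrt (\<lambda>x y. density p w y < density p w x) bs"
  shows "is_sidney_decomp p w bs"
  using assms
proof (induction bs)
  case (Cons b bs)
  have "\<And>c. c \<in> set (b # bs) \<Longrightarrow> max_density_block p w c \<and> density p w c \<le> density p w b"
    using Cons.prems by (auto simp: less_imp_le)
  then have "\<forall>\<pi>. prefix \<pi> (concat (b # bs)) \<longrightarrow> excess p w (density p w b) \<pi> \<le> 0"
    using excess_prefix_concat_nonpos by blast
  then show ?case using Cons by (auto simp: max_density_block_def)
qed simp

end

text \<open>Stacks of blocks are kept with their top first.\<close>
fun merge_top :: "(nat \<Rightarrow> real) \<Rightarrow> (nat \<Rightarrow> real) \<Rightarrow> nat list list \<Rightarrow> nat list list" where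
  "merge_top p w (b1 # b2 # bs) =
    (if total w b2 * total p b1 \<le> total w b1 * total p b2
     then merge_top p w ((b2 @ b1) # bs) else b1 # b2 # bs)"
| "merge_top p w bs = bs"

fun stack_decomp :: "(nat \<Rightarrow> real) \<Rightarrow> (nat \<Rightarrow> real) \<Rightarrow> nat \<Rightarrow> nat list list" where
  "stack_decomp p w 0 = []"
| "stack_decomp p w (Suc i) = merge_top p w ([i] # stack_decomp p w i)"

definition stack_invariant :: "(nat \<Rightarrow> real) \<Rightarrow> (nat \<Rightarrow> real) \<Rightarrow> nat list list \<Rightarrow> nat \<Rightarrow> bool" where
  "stack_invariant p w bs i \<longleftrightarrow> concat (rev bs) = [0..<i] \<and> (\<forall>b\<in>set bs. max_density_block p w b)
     \<and> sorted_wrt (\<lambda>x y. density p w x < density p w y) bs"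

lemma stack_invariant_merge_top:
  "\<forall>x. p x > 0 \<Longrightarrow> concat (rev bs) = [0..<i] \<Longrightarrow> \<forall>b\<in>set bs. max_density_block p w b
    \<Longrightarrow> sorted_wrt (\<lambda>x y. density p w x < density p w y) (tl bs)
    \<Longrightarrow> stack_invariant p w (merge_top p w bs) i"
proof (induction p w bs rule: merge_top.induct)
  case (1 p w b1 b2 bs)
  note p_pos = "1.prems"(1)
  have ne: "b1 \<noteq> []" "b2 \<noteq> []" using "1.prems"(3) by (auto simp: max_density_block_def)
  show ?case
  proof (cases "total w b2 * total p b1 \<le> total w b1 * total p b2")
    case True
    then have "density p w b2 \<le> density p w b1"
      using cross_le_iff_density_le[OF p_pos ne] by simp
    then have "max_density_block p w (b2 @ b1)"
      using max_density_block_append[OF p_pos] "1.prems"(3) by auto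
    then show ?thesis using "1.IH"[OF True p_pos] "1.prems" True by auto
  next
    case False
    then have "density p w b1 < density p w b2"
      using cross_le_iff_density_le[OF p_pos ne] by simp
    then have "sorted_wrt (\<lambda>x y. density p w x < density p w y) (b1 # b2 # bs)"
      using "1.prems"(4) by auto
    then show ?thesis using False "1.prems" by (simp add: stack_invariant_def)
  qed
qed (simp_all add: stack_invariant_def)

lemma stack_invariant_stack_decomp:
  assumes p_pos: "\<forall>x. p x > 0"
  shows "stack_invariant p w (stack_decomp p w i) i"
proof (induction i)
  case (Suc i)
  have "max_density_block p w [i]"
    using p_pos[rule_format, of i]
    by (auto simp: max_density_block_def prefix_Cons excess_def density_def)
  then show ?case
    using Suc stack_invariant_merge_top[OF p_pos, of "[i] # stack_decomp p w i" "Suc i" w]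
    by (auto simp: stack_invariant_def)
qed (simp add: stack_invariant_def)

lemma stack_decomp_correct:
  assumes "\<forall>x. p x > 0"
  shows "is_sidney_decomp p w (rev (stack_decomp p w i))"
    and "concat (rev (stack_decomp p w i)) = [0..<i]"
  using stack_invariant_stack_decomp[OF assms, of w i]
    is_sidney_decomp_if_sorted[OF assms, of "rev (stack_decomp p w i)" w]
  by (auto simp: stack_invariant_def sorted_wrt_rev)

lemma length_concat_merge_top: "length (concat (merge_top p w bs)) = length (concat bs)"
  by (induction p w bs rule: merge_top.induct) auto

lemma length_merge_top_le: "length (merge_top p w bs) \<le> length bs"
  by (induction p w bs rule: merge_top.induct) auto

lemma length_concat_stack_decomp: "length (concat (stack_decomp p w i)) = i"
  by (induction i) (auto simp: length_concat_merge_top)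

lemma length_stack_decomp_le: "length (stack_decomp p w i) \<le> i"
  by (induction i) (auto intro: le_trans[OF length_merge_top_le])

subsection \<open>The two-chain instance\<close>

text \<open>Outside the chain the processing time is set to \<open>1\<close>, so that it is positive
  everywhere.\<close>
definition chain_ptime :: "job_data list \<Rightarrow> nat \<Rightarrow> real" where
  "chain_ptime c j = (if j < length c then fst (c ! j) else 1)"

definition chain_weight :: "job_data list \<Rightarrow> nat \<Rightarrow> real" where
  "chain_weight c j = snd (c ! j)"

definition job_ptime :: "job_data list \<Rightarrow> job_data list \<Rightarrow> nat + nat \<Rightarrow> real" where
  "job_ptime c1 c2 x = (case x of Inl j \<Rightarrow> chain_ptime c1 j | Inr j \<Rightarrow> chain_ptime c2 j)"

definition chain_blocks :: "job_data list \<Rightarrow> nat list list" where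
  "chain_blocks c = rev (stack_decomp (chain_ptime c) (chain_weight c) (length c))"

definition left_blocks :: "job_data list \<Rightarrow> (nat + nat) list list" where
  "left_blocks c1 = map (map Inl) (chain_blocks c1)"

definition right_blocks :: "job_data list \<Rightarrow> (nat + nat) list list" where
  "right_blocks c2 = map (map Inr) (chain_blocks c2)"

definition merged_schedule :: "job_data list \<Rightarrow> job_data list \<Rightarrow> (nat + nat) list" where
  "merged_schedule c1 c2
    = merge_blocks (job_ptime c1 c2) (weight c1 c2) (left_blocks c1) (right_blocks c2)"

lemma chain_ptime_pos:
  assumes "valid_instance c1 c2"
  shows "\<forall>j. chain_ptime c1 j > 0" "\<forall>j. chain_ptime c2 j > 0"
  using assms unfolding valid_instance_def chain_ptime_def by (auto simp: case_prod_beta)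

lemma job_ptime_pos: "valid_instance c1 c2 \<Longrightarrow> \<forall>x. job_ptime c1 c2 x > 0"
  using chain_ptime_pos by (auto simp: job_ptime_def split: sum.split)

lemma job_ptime_comp:
  "job_ptime c1 c2 \<circ> Inl = chain_ptime c1" "job_ptime c1 c2 \<circ> Inr = chain_ptime c2"
  "weight c1 c2 \<circ> Inl = chain_weight c1" "weight c1 c2 \<circ> Inr = chain_weight c2"
  by (rule ext, simp add: job_ptime_def chain_weight_def)+

lemma concat_chain_blocks: "\<forall>j. chain_ptime c j > 0 \<Longrightarrow> concat (chain_blocks c) = [0..<length c]"
  unfolding chain_blocks_def using stack_decomp_correct(2) by blast

lemma concat_left_blocks:
  "\<forall>j. chain_ptime c1 j > 0 \<Longrightarrow> concat (left_blocks c1) = map Inl [0..<length c1]"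
  unfolding left_blocks_def by (simp add: map_concat[symmetric] concat_chain_blocks)

lemma concat_right_blocks:
  "\<forall>j. chain_ptime c2 j > 0 \<Longrightarrow> concat (right_blocks c2) = map Inr [0..<length c2]"
  unfolding right_blocks_def by (simp add: map_concat[symmetric] concat_chain_blocks)

lemma merged_schedule_feasible: "valid_instance c1 c2 \<Longrightarrow> merged_schedule c1 c2 \<in> feasible_seqs c1 c2"
  unfolding merged_schedule_def feasible_seqs_def
  using merge_blocks_in_shuffles concat_left_blocks concat_right_blocks chain_ptime_pos by metis

lemma length_merged_schedule:
  "valid_instance c1 c2 \<Longrightarrow> length (merged_schedule c1 c2) = length c1 + length c2"
  using merged_schedule_feasible length_shuffles unfolding feasible_seqs_def by fastforce

lemma twct_eq_weighted_cost:
  assumes "\<sigma> \<in> feasible_seqs c1 c2"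
  shows "twct c1 c2 \<sigma> = weighted_cost (job_ptime c1 c2) (weight c1 c2) \<sigma>"
proof -
  have jobs: "set \<sigma> = Inl ` {0..<length c1} \<union> Inr ` {0..<length c2}"
    using set_shuffles[OF assms[unfolded feasible_seqs_def]] by simp
  have "ptime c1 c2 x = job_ptime c1 c2 x" if "x \<in> set \<sigma>" for x
    using that jobs by (auto simp: job_ptime_def chain_ptime_def)
  then have "twct c1 c2 \<sigma> = (\<Sum>k<length \<sigma>. weight c1 c2 (\<sigma> ! k) * (\<Sum>l\<le>k. job_ptime c1 c2 (\<sigma> ! l)))"
    unfolding twct_def completion_def by (intro sum.cong refl arg_cong2[where f = "(*)"]) simp_all
  then show ?thesis using weighted_cost_eq_sum by metis
qed

theorem optimal_seq_merged_schedule: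
  assumes valid: "valid_instance c1 c2"
  shows "optimal_seq c1 c2 (merged_schedule c1 c2)"
  unfolding optimal_seq_def
proof (intro conjI ballI)
  show feasible: "merged_schedule c1 c2 \<in> feasible_seqs c1 c2"
    using merged_schedule_feasible[OF valid] .
  fix \<tau> assume \<tau>: "\<tau> \<in> feasible_seqs c1 c2"
  have pos: "\<forall>j. chain_ptime c1 j > 0" "\<forall>j. chain_ptime c2 j > 0"
    using chain_ptime_pos[OF valid] by auto
  have "is_sidney_decomp (job_ptime c1 c2) (weight c1 c2) (left_blocks c1)"
    "is_sidney_decomp (job_ptime c1 c2) (weight c1 c2) (right_blocks c2)"
    unfolding left_blocks_def right_blocks_def chain_blocks_def
    by (rule is_sidney_decomp_map, simp add: job_ptime_comp stack_decomp_correct(1) pos)+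
  moreover have "\<tau> \<in> shuffles (concat (left_blocks c1)) (concat (right_blocks c2))"
    using \<tau> concat_left_blocks[OF pos(1)] concat_right_blocks[OF pos(2)]
    by (simp add: feasible_seqs_def)
  ultimately have "weighted_cost (job_ptime c1 c2) (weight c1 c2) (merged_schedule c1 c2)
      \<le> weighted_cost (job_ptime c1 c2) (weight c1 c2) \<tau>"
    unfolding merged_schedule_def using merge_blocks_optimal job_ptime_pos[OF valid] by blast
  then show "twct c1 c2 (merged_schedule c1 c2) \<le> twct c1 c2 \<tau>"
    using twct_eq_weighted_cost[OF \<tau>] twct_eq_weighted_cost[OF feasible] by simp
qed

subsection \<open>The program\<close>

text \<open>Lines 0--12 call the subroutine at line 60 once per chain (register 8 selects the
  return address); it leaves the blocks of the chain on a stack in memory. Lines 13--58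
  merge the two stacks and write the output. Registers 0, 1, 2 hold the constants 0, 1, 4.
  The stacks of the two chains grow downwards from the addresses -4 and -6 with stride 4,
  so they interleave: a block at address \<open>t\<close> keeps its total processing time in
  \<open>rmem t\<close>, its total weight in \<open>rmem (t - 1)\<close>, and in \<open>imem (t - 1)\<close> the chain
  position just after its last job. The lines of the listing below start at the addresses
  0, 7, 13, 21, 33, 35, 37, 44, 47, 49, 56, 59, 60, 63, 76, 88 and 96.\<close>

definition prog :: "instr list" where
  "prog =
    [IConst 1 1, IConst 2 4, ILoad 4 0, IConst 5 0, IConst 12 (-4), IConst 8 0, Jmp 60,
     IAdd 11 7 0, IAdd 5 4 0, ILoad 4 1, IConst 12 (-6), IConst 8 1, Jmp 60,
     IAdd 21 7 0, IConst 13 0, IConst 14 0, IConst 15 (-4), IConst 16 (-6), IConst 17 0,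
       IConst 18 0, IConst 19 2,
     JmpILe 11 13 33, JmpILe 21 14 35, RLoad 2 15, ISub 9 15 1, RLoad 3 9, RLoad 4 16,
       ISub 9 16 1, RLoad 5 9, RMul 6 3 4, RMul 7 5 2, JmpRLe 7 6 35, Jmp 47,
     JmpILe 21 14 59, Jmp 47,
     ISub 9 15 1, ILoad 20 9,
     JmpILe 20 17 44, IStore 0 19, IAdd 9 19 1, IStore 17 9, IAdd 19 9 1, IAdd 17 17 1, Jmp 37,
     IAdd 13 13 1, ISub 15 15 2, Jmp 21,
     ISub 9 16 1, ILoad 20 9,
     JmpILe 20 18 56, IStore 1 19, IAdd 9 19 1, IStore 18 9, IAdd 19 9 1, IAdd 18 18 1, Jmp 49,
     IAdd 14 14 1, ISub 16 16 2, Jmp 21,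
     Halt,
     IAdd 6 12 2, IConst 7 0, IConst 3 0,
     JmpILe 4 3 96, IAdd 9 5 3, IAdd 9 9 9, RLoad 0 9, IAdd 9 9 1, RLoad 1 9, ISub 6 6 2,
       IAdd 7 7 1, IAdd 3 3 1, ISub 9 6 1, IStore 3 9, RStore 0 6, RStore 1 9,
     JmpILe 7 1 63, IAdd 9 6 2, ISub 10 9 1, ISub 23 6 1, RLoad 2 9, RLoad 3 10, RLoad 4 6,
       RLoad 5 23, RMul 6 3 4, RMul 7 5 2, JmpRLe 6 7 88, Jmp 63,
     IStore 3 10, RAdd 2 2 4, RAdd 3 3 5, RStore 2 9, RStore 3 10, IAdd 6 6 2, ISub 7 7 1,
       Jmp 76,
     JmpILe 8 0 7, Jmp 13]"

lemma length_prog [simp]: "length prog = 98"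
  by (simp add: prog_def)

lemmas prog_nth = arg_cong[where f = "\<lambda>P. P ! n" for n, OF prog_def]

lemma run_0 [simp]: "run P 0 s = s"
  by (simp add: run_def)

lemma run_Suc: "run P (Suc n) s = run P n (step P s)"
  by (simp add: run_def funpow_Suc_right del: funpow.simps)

lemma run_add: "run P (m + n) s = run P n (run P m s)"
  by (simp add: run_def add.commute[of m n] funpow_add)

lemma run_numeral: "run P (numeral k) s = run P (pred_numeral k) (step P s)"
  by (simp add: numeral_eq_Suc run_Suc)

lemma run_1: "run P 1 s = step P s"
  by (simp add: run_def)

lemma step_prog:
  "pc s < length prog \<Longrightarrow> prog ! pc s \<noteq> Halt \<Longrightarrow> step prog s = exec (prog ! pc s) s"
  by (simp add: step_def halted_def)

lemmas run_prog_simps = run_numeral run_1 run_Suc pred_numeral_simps step_prog prog_nth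

definition reaches :: "state \<Rightarrow> state \<Rightarrow> nat \<Rightarrow> bool" where
  "reaches s s' k \<longleftrightarrow> (\<exists>t\<le>k. run prog t s = s')"

lemma reaches_run: "n \<le> k \<Longrightarrow> reaches s (run prog n s) k"
  by (auto simp: reaches_def)

lemma reaches_trans: "reaches s s1 k1 \<Longrightarrow> reaches s1 s2 k2 \<Longrightarrow> reaches s s2 (k1 + k2)"
  unfolding reaches_def by (metis add_le_mono run_add)

lemma reaches_run_trans: "reaches (run prog n s) s' k \<Longrightarrow> reaches s s' (n + k)"
  using reaches_trans[OF reaches_run[OF order_refl]] .

lemma reaches_mono: "reaches s s' k \<Longrightarrow> k \<le> k' \<Longrightarrow> reaches s s' k'"
  unfolding reaches_def using le_trans by blast

subsection \<open>Straight-line stretches of the program\<close>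

lemma run_init:
  assumes "pc s = 0" "ireg s 0 = 0"
  shows "pc (run prog 7 s) = 60" "ireg (run prog 7 s) 1 = 1" "ireg (run prog 7 s) 2 = 4"
    "ireg (run prog 7 s) 4 = imem s 0" "ireg (run prog 7 s) 5 = 0" "ireg (run prog 7 s) 12 = -4"
    "ireg (run prog 7 s) 8 = 0" "ireg (run prog 7 s) 0 = 0"
    "imem (run prog 7 s) = imem s" "rmem (run prog 7 s) = rmem s"
  using assms by (simp_all add: run_prog_simps)

lemma run_return_first:
  assumes "pc s = 96" "ireg s 8 = 0" "ireg s 0 = 0"
  shows "run prog 1 s = s\<lparr>pc := 7\<rparr>"
  using assms by (simp add: run_prog_simps)

lemma run_call_second:
  assumes "pc s = 7" "ireg s 0 = 0" "ireg s 1 = 1"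
  shows "pc (run prog 6 s) = 60" "ireg (run prog 6 s) 11 = ireg s 7"
    "ireg (run prog 6 s) 5 = ireg s 4"
    "ireg (run prog 6 s) 4 = imem s 1" "ireg (run prog 6 s) 12 = -6" "ireg (run prog 6 s) 8 = 1"
    "\<forall>r. r \<notin> {11, 5, 4, 12, 8} \<longrightarrow> ireg (run prog 6 s) r = ireg s r"
    "imem (run prog 6 s) = imem s" "rmem (run prog 6 s) = rmem s"
  using assms by (simp_all add: run_prog_simps)

lemma run_return_second:
  assumes "pc s = 96" "ireg s 8 = 1" "ireg s 0 = 0"
  shows "run prog 2 s = s\<lparr>pc := 13\<rparr>"
  using assms by (simp add: run_prog_simps)

lemma run_decomp_entry:
  assumes "pc s = 60" "ireg s 2 = 4" "ireg s 12 = base"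
  shows "pc (run prog 3 s) = 63"
    "ireg (run prog 3 s) = (ireg s)(6 := base + 4, 7 := 0, 3 := 0)"
    "imem (run prog 3 s) = imem s" "rmem (run prog 3 s) = rmem s"
  using assms by (simp_all add: run_prog_simps)

lemma run_decomp_done:
  assumes "pc s = 63" "ireg s 3 = int i" "ireg s 4 = int len" "len \<le> i"
  shows "run prog 1 s = s\<lparr>pc := 96\<rparr>"
  using assms by (simp add: run_prog_simps)

lemma run_decomp_push:
  assumes "pc s = 63" "ireg s 1 = 1" "ireg s 2 = 4" "ireg s 3 = int i" "ireg s 4 = int len"
    "ireg s 5 = off" "ireg s 6 = t" "ireg s 7 = h" "i < len"
  shows "pc (run prog 13 s) = 76"
    "ireg (run prog 13 s) = (ireg s)(9 := t - 5, 6 := t - 4, 7 := h + 1, 3 := int i + 1)"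
    "imem (run prog 13 s) = (imem s)(t - 5 := int i + 1)"
    "rmem (run prog 13 s) =
       (rmem s)(t - 4 := rmem s (2 * (off + int i)), t - 5 := rmem s (2 * (off + int i) + 1))"
  using assms by (simp_all add: run_prog_simps fun_eq_iff algebra_simps)

lemma run_decomp_single_block:
  assumes "pc s = 76" "ireg s 1 = 1" "ireg s 7 \<le> 1"
  shows "run prog 1 s = s\<lparr>pc := 63\<rparr>"
  using assms by (simp add: run_prog_simps)

lemma run_decomp_no_merge:
  assumes "pc s = 76" "ireg s 1 = 1" "ireg s 2 = 4" "ireg s 6 = t" "ireg s 7 > 1"
    "\<not> rmem s (t + 3) * rmem s t \<le> rmem s (t - 1) * rmem s (t + 4)"
  shows "pc (run prog 12 s) = 63" "\<forall>r. r \<notin> {9, 10, 23} \<longrightarrow> ireg (run prog 12 s) r = ireg s r"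
    "imem (run prog 12 s) = imem s" "rmem (run prog 12 s) = rmem s"
  using assms by (simp_all add: run_prog_simps algebra_simps)

lemma run_decomp_merge:
  assumes "pc s = 76" "ireg s 1 = 1" "ireg s 2 = 4" "ireg s 3 = int i" "ireg s 6 = t" "ireg s 7 = h"
    "h > 1" "rmem s (t + 3) * rmem s t \<le> rmem s (t - 1) * rmem s (t + 4)"
  shows "pc (run prog 19 s) = 76" "\<forall>r. r \<notin> {9, 10, 23, 6, 7} \<longrightarrow> ireg (run prog 19 s) r = ireg s r"
    "ireg (run prog 19 s) 6 = t + 4" "ireg (run prog 19 s) 7 = h - 1"
    "imem (run prog 19 s) = (imem s)(t + 3 := int i)"
    "rmem (run prog 19 s) =
       (rmem s)(t + 4 := rmem s (t + 4) + rmem s t, t + 3 := rmem s (t + 3) + rmem s (t - 1))"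
  using assms by (simp_all add: run_prog_simps fun_eq_iff algebra_simps)

lemma run_merge_init:
  assumes "pc s = 13" "ireg s 0 = 0"
  shows "pc (run prog 8 s) = 21" "ireg (run prog 8 s) 21 = ireg s 7"
    "ireg (run prog 8 s) 13 = 0" "ireg (run prog 8 s) 14 = 0" "ireg (run prog 8 s) 15 = -4"
    "ireg (run prog 8 s) 16 = -6" "ireg (run prog 8 s) 17 = 0" "ireg (run prog 8 s) 18 = 0"
    "ireg (run prog 8 s) 19 = 2"
    "\<forall>r. r \<notin> {21, 13, 14, 15, 16, 17, 18, 19} \<longrightarrow> ireg (run prog 8 s) r = ireg s r"
    "imem (run prog 8 s) = imem s" "rmem (run prog 8 s) = rmem s"
  using assms by (simp_all add: run_prog_simps)

lemma run_merge_halt: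
  assumes "pc s = 21" "ireg s 11 \<le> ireg s 13" "ireg s 21 \<le> ireg s 14"
  shows "run prog 2 s = s\<lparr>pc := 59\<rparr>"
  using assms by (simp add: run_prog_simps)

lemma run_merge_only_second:
  assumes "pc s = 21" "ireg s 11 \<le> ireg s 13" "\<not> ireg s 21 \<le> ireg s 14" "ireg s 1 = 1"
  shows "pc (run prog 5 s) = 49" "\<forall>r. r \<notin> {9, 20} \<longrightarrow> ireg (run prog 5 s) r = ireg s r"
    "ireg (run prog 5 s) 20 = imem s (ireg s 16 - 1)"
    "imem (run prog 5 s) = imem s" "rmem (run prog 5 s) = rmem s"
  using assms by (simp_all add: run_prog_simps)

lemma run_merge_only_first:
  assumes "pc s = 21" "\<not> ireg s 11 \<le> ireg s 13" "ireg s 21 \<le> ireg s 14" "ireg s 1 = 1"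
  shows "pc (run prog 4 s) = 37" "\<forall>r. r \<notin> {9, 20} \<longrightarrow> ireg (run prog 4 s) r = ireg s r"
    "ireg (run prog 4 s) 20 = imem s (ireg s 15 - 1)"
    "imem (run prog 4 s) = imem s" "rmem (run prog 4 s) = rmem s"
  using assms by (simp_all add: run_prog_simps)

lemma run_merge_pick_first:
  assumes "pc s = 21" "\<not> ireg s 11 \<le> ireg s 13" "\<not> ireg s 21 \<le> ireg s 14" "ireg s 1 = 1"
    "rmem s (ireg s 16 - 1) * rmem s (ireg s 15) \<le> rmem s (ireg s 15 - 1) * rmem s (ireg s 16)"
  shows "pc (run prog 13 s) = 37" "\<forall>r. r \<notin> {9, 20} \<longrightarrow> ireg (run prog 13 s) r = ireg s r"
    "ireg (run prog 13 s) 20 = imem s (ireg s 15 - 1)"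
    "imem (run prog 13 s) = imem s" "rmem (run prog 13 s) = rmem s"
  using assms by (simp_all add: run_prog_simps)

lemma run_merge_pick_second:
  assumes "pc s = 21" "\<not> ireg s 11 \<le> ireg s 13" "\<not> ireg s 21 \<le> ireg s 14" "ireg s 1 = 1"
    "\<not> rmem s (ireg s 16 - 1) * rmem s (ireg s 15) \<le> rmem s (ireg s 15 - 1) * rmem s (ireg s 16)"
  shows "pc (run prog 14 s) = 49" "\<forall>r. r \<notin> {9, 20} \<longrightarrow> ireg (run prog 14 s) r = ireg s r"
    "ireg (run prog 14 s) 20 = imem s (ireg s 16 - 1)"
    "imem (run prog 14 s) = imem s" "rmem (run prog 14 s) = rmem s"
  using assms by (simp_all add: run_prog_simps)

lemma run_output_first:
  assumes "pc s = 37" "\<not> ireg s 20 \<le> ireg s 17" "ireg s 0 = 0" "ireg s 1 = 1"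
  shows "pc (run prog 7 s) = 37" "\<forall>r. r \<notin> {9, 17, 19} \<longrightarrow> ireg (run prog 7 s) r = ireg s r"
    "ireg (run prog 7 s) 17 = ireg s 17 + 1" "ireg (run prog 7 s) 19 = ireg s 19 + 2"
    "imem (run prog 7 s) = (imem s)(ireg s 19 := 0, ireg s 19 + 1 := ireg s 17)"
    "rmem (run prog 7 s) = rmem s"
  using assms by (simp_all add: run_prog_simps fun_eq_iff)

lemma run_output_first_done:
  assumes "pc s = 37" "ireg s 20 \<le> ireg s 17" "ireg s 1 = 1" "ireg s 2 = 4"
  shows "pc (run prog 4 s) = 21" "\<forall>r. r \<notin> {13, 15} \<longrightarrow> ireg (run prog 4 s) r = ireg s r"
    "ireg (run prog 4 s) 13 = ireg s 13 + 1" "ireg (run prog 4 s) 15 = ireg s 15 - 4"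
    "imem (run prog 4 s) = imem s" "rmem (run prog 4 s) = rmem s"
  using assms by (simp_all add: run_prog_simps)

lemma run_output_second:
  assumes "pc s = 49" "\<not> ireg s 20 \<le> ireg s 18" "ireg s 1 = 1"
  shows "pc (run prog 7 s) = 49" "\<forall>r. r \<notin> {9, 18, 19} \<longrightarrow> ireg (run prog 7 s) r = ireg s r"
    "ireg (run prog 7 s) 18 = ireg s 18 + 1" "ireg (run prog 7 s) 19 = ireg s 19 + 2"
    "imem (run prog 7 s) = (imem s)(ireg s 19 := 1, ireg s 19 + 1 := ireg s 18)"
    "rmem (run prog 7 s) = rmem s"
  using assms by (simp_all add: run_prog_simps fun_eq_iff)

lemma run_output_second_done:
  assumes "pc s = 49" "ireg s 20 \<le> ireg s 18" "ireg s 1 = 1" "ireg s 2 = 4"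
  shows "pc (run prog 4 s) = 21" "\<forall>r. r \<notin> {14, 16} \<longrightarrow> ireg (run prog 4 s) r = ireg s r"
    "ireg (run prog 4 s) 14 = ireg s 14 + 1" "ireg (run prog 4 s) 16 = ireg s 16 - 4"
    "imem (run prog 4 s) = imem s" "rmem (run prog 4 s) = rmem s"
  using assms by (simp_all add: run_prog_simps)

subsection \<open>Block stacks in memory\<close>

definition stack_cell :: "int \<Rightarrow> int \<Rightarrow> bool" where
  "stack_cell base x \<longleftrightarrow> x \<le> base \<and> (x mod 4 = base mod 4 \<or> x mod 4 = (base - 1) mod 4)"

lemma stack_cellI:
  assumes "k \<ge> 0"
  shows "stack_cell base (base - 4 * k)" "stack_cell base (base - 4 * k - 1)"
proof -
  have "(base + 4 * (- k)) mod 4 = base mod 4" "(base - 1 + 4 * (- k)) mod 4 = (base - 1) mod 4"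
    by (rule mod_mult_self2)+
  then show "stack_cell base (base - 4 * k)" "stack_cell base (base - 4 * k - 1)"
    using assms unfolding stack_cell_def by (simp_all add: algebra_simps)
qed

lemma not_stack_cell_second_first:
  "\<not> stack_cell (-6) (-4 - 4 * int k)" "\<not> stack_cell (-6) (-4 - 4 * int k - 1)"
proof -
  have "(-4 - 4 * int k) mod 4 = 0" "(-4 - 4 * int k - 1) mod 4 = 3"
    using mod_mult_self2[of 0 4 "-1 - int k"] mod_mult_self2[of 3 4 "-2 - int k"]
    by (simp_all add: algebra_simps)
  then show "\<not> stack_cell (-6) (-4 - 4 * int k)" "\<not> stack_cell (-6) (-4 - 4 * int k - 1)"
    by (simp_all add: stack_cell_def)
qed

definition stack_repr ::
    "int \<Rightarrow> (nat \<Rightarrow> real) \<Rightarrow> (nat \<Rightarrow> real) \<Rightarrow> nat list list \<Rightarrow> (int \<Rightarrow> int) \<Rightarrow> (int \<Rightarrow> real) \<Rightarrow> bool" where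
  "stack_repr t p w bs mi mr \<longleftrightarrow> (\<forall>j<length bs.
     mi (t + 4 * int j - 1) = int (length (concat (drop j bs))) \<and>
     mr (t + 4 * int j) = total p (bs ! j) \<and> mr (t + 4 * int j - 1) = total w (bs ! j))"

lemma stack_repr_top_two:
  assumes "stack_repr t p w (b1 # b2 # bs) mi mr"
  shows "mr t = total p b1" "mr (t - 1) = total w b1"
    and "mr (t + 4) = total p b2" "mr (t + 3) = total w b2"
  using assms[unfolded stack_repr_def, rule_format, of 0]
    assms[unfolded stack_repr_def, rule_format, of 1]
  by (simp_all add: algebra_simps)

lemma stack_repr_push:
  assumes "stack_repr t p w bs mi mr"
  shows "stack_repr (t - 4) p w ([i] # bs) (mi(t - 5 := int (length (concat bs)) + 1))
           (mr(t - 4 := p i, t - 5 := w i))"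
  unfolding stack_repr_def
proof (intro allI impI)
  fix j assume "j < length ([i] # bs)"
  with assms show "(mi(t - 5 := int (length (concat bs)) + 1)) (t - 4 + 4 * int j - 1)
        = int (length (concat (drop j ([i] # bs)))) \<and>
      (mr(t - 4 := p i, t - 5 := w i)) (t - 4 + 4 * int j) = total p (([i] # bs) ! j) \<and>
      (mr(t - 4 := p i, t - 5 := w i)) (t - 4 + 4 * int j - 1) = total w (([i] # bs) ! j)"
    by (cases j) (auto simp: stack_repr_def algebra_simps)
qed

lemma stack_repr_merge:
  assumes "stack_repr t p w (b1 # b2 # bs) mi mr"
  shows "stack_repr (t + 4) p w ((b2 @ b1) # bs) (mi(t + 3 := int (length (concat (b1 # b2 # bs)))))
           (mr(t + 4 := mr (t + 4) + mr t, t + 3 := mr (t + 3) + mr (t - 1)))"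
  unfolding stack_repr_def
proof (intro allI impI)
  fix j assume j: "j < length ((b2 @ b1) # bs)"
  show "(mi(t + 3 := int (length (concat (b1 # b2 # bs))))) (t + 4 + 4 * int j - 1)
        = int (length (concat (drop j ((b2 @ b1) # bs)))) \<and>
      (mr(t + 4 := mr (t + 4) + mr t, t + 3 := mr (t + 3) + mr (t - 1))) (t + 4 + 4 * int j)
        = total p (((b2 @ b1) # bs) ! j) \<and>
      (mr(t + 4 := mr (t + 4) + mr t, t + 3 := mr (t + 3) + mr (t - 1))) (t + 4 + 4 * int j - 1)
        = total w (((b2 @ b1) # bs) ! j)"
  proof (cases j)
    case 0
    then show ?thesis using stack_repr_top_two[OF assms] by simp
  next
    case (Suc j')
    then have "Suc (Suc j') < length (b1 # b2 # bs)" using j by simp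
    from assms[unfolded stack_repr_def, rule_format, OF this] Suc
    show ?thesis by (simp add: algebra_simps)
  qed
qed

definition stack_repr_bottom ::
    "int \<Rightarrow> (nat \<Rightarrow> real) \<Rightarrow> (nat \<Rightarrow> real) \<Rightarrow> nat list list \<Rightarrow> (int \<Rightarrow> int) \<Rightarrow> (int \<Rightarrow> real) \<Rightarrow> bool" where
  "stack_repr_bottom base p w bs mi mr \<longleftrightarrow> (\<forall>k<length bs.
     mi (base - 4 * int k - 1) = int (length (concat (take (Suc k) bs))) \<and>
     mr (base - 4 * int k) = total p (bs ! k) \<and> mr (base - 4 * int k - 1) = total w (bs ! k))"

lemma stack_repr_bottom_rev:
  assumes "stack_repr (base + 4 - 4 * int (length bs)) p w bs mi mr"
  shows "stack_repr_bottom base p w (rev bs) mi mr"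
  unfolding stack_repr_bottom_def
proof (intro allI impI)
  fix k assume k: "k < length (rev bs)"
  define j where "j = length bs - 1 - k"
  have j: "j < length bs" using k j_def by simp
  have addr: "base + 4 - 4 * int (length bs) + 4 * int j = base - 4 * int k"
    using k j_def by (simp add: of_nat_diff)
  have nth: "rev bs ! k = bs ! j" using k j_def by (simp add: rev_nth)
  have "take (Suc k) (rev bs) = rev (drop j bs)" using k j_def by (simp add: take_rev)
  then have len: "length (concat (take (Suc k) (rev bs))) = length (concat (drop j bs))"
    by (simp add: length_concat rev_map[symmetric] sum_list_rev)
  show "mi (base - 4 * int k - 1) = int (length (concat (take (Suc k) (rev bs)))) \<and>
    mr (base - 4 * int k) = total p (rev bs ! k) \<and> mr (base - 4 * int k - 1) = total w (rev bs ! k)"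
    using assms[unfolded stack_repr_def, rule_format, OF j] unfolding addr nth len by simp
qed

lemma stack_repr_bottom_cong:
  assumes "stack_repr_bottom base p w bs mi mr"
    and "\<And>k. mi' (base - 4 * int k - 1) = mi (base - 4 * int k - 1)"
    and "\<And>k. mr' (base - 4 * int k) = mr (base - 4 * int k)"
    and "\<And>k. mr' (base - 4 * int k - 1) = mr (base - 4 * int k - 1)"
  shows "stack_repr_bottom base p w bs mi' mr'"
  using assms unfolding stack_repr_bottom_def by auto

lemma stack_repr_bottom_upd:
  assumes "stack_repr_bottom base p w bs mi mr" "base \<le> -4" "x \<ge> 0" "y \<ge> 0"
  shows "stack_repr_bottom base p w bs (mi(x := u, y := v)) mr"
  using assms unfolding stack_repr_bottom_def by auto

subsection \<open>The decomposition subroutine\<close>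

definition decomp_entry ::
    "state \<Rightarrow> nat \<Rightarrow> int \<Rightarrow> int \<Rightarrow> (nat \<Rightarrow> real) \<Rightarrow> (nat \<Rightarrow> real) \<Rightarrow> bool" where
  "decomp_entry s0 len off base p w \<longleftrightarrow>
     ireg s0 1 = 1 \<and> ireg s0 2 = 4 \<and> ireg s0 4 = int len \<and> ireg s0 5 = off \<and> ireg s0 12 = base \<and>
     0 \<le> off \<and> base \<le> -4 \<and>
     (\<forall>j<len. rmem s0 (2 * (off + int j)) = p j \<and> rmem s0 (2 * (off + int j) + 1) = w j)"

definition decomp_scratch :: "nat set" where
  "decomp_scratch = {3, 6, 7, 9, 10, 23}"

definition decomp_frame ::
    "state \<Rightarrow> int \<Rightarrow> (nat \<Rightarrow> real) \<Rightarrow> (nat \<Rightarrow> real) \<Rightarrow> nat list list \<Rightarrow> state \<Rightarrow> bool" where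
  "decomp_frame s0 base p w bs s \<longleftrightarrow>
     ireg s 7 = int (length bs) \<and> ireg s 6 = base + 4 - 4 * int (length bs) \<and>
     (\<forall>r. r \<notin> decomp_scratch \<longrightarrow> ireg s r = ireg s0 r) \<and>
     stack_repr (ireg s 6) p w bs (imem s) (rmem s) \<and>
     (\<forall>x. \<not> stack_cell base x \<longrightarrow> imem s x = imem s0 x \<and> rmem s x = rmem s0 x)"

definition decomp_outer_inv ::
    "state \<Rightarrow> nat \<Rightarrow> int \<Rightarrow> (nat \<Rightarrow> real) \<Rightarrow> (nat \<Rightarrow> real) \<Rightarrow> nat \<Rightarrow> state \<Rightarrow> bool" where
  "decomp_outer_inv s0 len base p w i s \<longleftrightarrow>
     pc s = 63 \<and> i \<le> len \<and> ireg s 3 = int i \<and> decomp_frame s0 base p w (stack_decomp p w i) s"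

definition decomp_inner_inv ::
    "state \<Rightarrow> nat \<Rightarrow> int \<Rightarrow> (nat \<Rightarrow> real) \<Rightarrow> (nat \<Rightarrow> real) \<Rightarrow> nat \<Rightarrow> nat list list \<Rightarrow> state \<Rightarrow> bool" where
  "decomp_inner_inv s0 len base p w i bs s \<longleftrightarrow>
     pc s = 76 \<and> i \<le> len \<and> ireg s 3 = int i \<and> bs \<noteq> [] \<and> length (concat bs) = i \<and>
     merge_top p w bs = stack_decomp p w i \<and> decomp_frame s0 base p w bs s"

lemma decomp_frame_pc [simp]:
  "decomp_frame s0 base p w bs (s\<lparr>pc := n\<rparr>) = decomp_frame s0 base p w bs s"
  by (simp add: decomp_frame_def)

lemma decomp_frame_regs:
  assumes "decomp_entry s0 len off base p w" "decomp_frame s0 base p w bs s"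
  shows "ireg s 1 = 1" "ireg s 2 = 4" "ireg s 4 = int len" "ireg s 5 = off"
  using assms by (auto simp: decomp_entry_def decomp_frame_def decomp_scratch_def)

lemma decomp_merge_step:
  assumes entry: "decomp_entry s0 len off base p w"
    and inv: "decomp_inner_inv s0 len base p w i (b1 # b2 # bs) s"
    and merge: "total w b2 * total p b1 \<le> total w b1 * total p b2"
  shows "decomp_inner_inv s0 len base p w i ((b2 @ b1) # bs) (run prog 19 s)"
proof -
  let ?st = "b1 # b2 # bs" and ?s' = "run prog 19 s"
  define t where "t = ireg s 6"
  have frame: "decomp_frame s0 base p w ?st s" and pc: "pc s = 76"
    and i: "i \<le> len" "ireg s 3 = int i" and len: "length (concat ?st) = i"
    and top: "merge_top p w ?st = stack_decomp p w i"
    using inv by (simp_all add: decomp_inner_inv_def)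
  have h: "ireg s 7 = int (length bs) + 2" and t: "t = base - 4 * int (length bs) - 4"
    and stk: "stack_repr t p w ?st (imem s) (rmem s)"
    and regs: "\<forall>r. r \<notin> decomp_scratch \<longrightarrow> ireg s r = ireg s0 r"
    and mem: "\<forall>x. \<not> stack_cell base x \<longrightarrow> imem s x = imem s0 x \<and> rmem s x = rmem s0 x"
    using frame unfolding decomp_frame_def t_def by auto
  have "rmem s (t + 3) * rmem s t \<le> rmem s (t - 1) * rmem s (t + 4)"
    using merge stack_repr_top_two[OF stk] by simp
  note run = run_decomp_merge[OF pc decomp_frame_regs(1,2)[OF entry frame] i(2)
      t_def[symmetric] h _ this]
  have addr: "t + 4 = base - 4 * int (length bs)" "t + 3 = base - 4 * int (length bs) - 1"
    using t by simp_all
  have cells: "stack_cell base (t + 4)" "stack_cell base (t + 3)"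
    unfolding addr by (simp_all add: stack_cellI)
  have "stack_repr (t + 4) p w ((b2 @ b1) # bs) (imem ?s') (rmem ?s')"
    using stack_repr_merge[OF stk, unfolded len] run by simp
  then show ?thesis
    using pc i len top merge run regs mem cells h t
    unfolding decomp_inner_inv_def decomp_frame_def
    by (auto simp: decomp_scratch_def)
qed

lemma decomp_inner_exit:
  assumes entry: "decomp_entry s0 len off base p w"
    and inv: "decomp_inner_inv s0 len base p w i bs s"
    and stop: "merge_top p w bs = bs"
  shows "\<exists>s'. reaches s s' 12 \<and> decomp_outer_inv s0 len base p w i s'"
proof -
  have frame: "decomp_frame s0 base p w bs s" and pc: "pc s = 76" and "bs \<noteq> []"
    using inv by (simp_all add: decomp_inner_inv_def)
  note regs = decomp_frame_regs(1,2)[OF entry frame]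
  have decomp: "stack_decomp p w i = bs" using inv stop by (simp add: decomp_inner_inv_def)
  from \<open>bs \<noteq> []\<close> consider (single) b where "bs = [b]"
    | (more) b1 b2 rest where "bs = b1 # b2 # rest"
    by (metis list.exhaust)
  then show ?thesis
  proof cases
    case single
    then have "ireg s 7 \<le> 1" using frame by (simp add: decomp_frame_def)
    then have "run prog 1 s = s\<lparr>pc := 63\<rparr>" using run_decomp_single_block[OF pc regs(1)] by simp
    moreover have "decomp_outer_inv s0 len base p w i (s\<lparr>pc := 63\<rparr>)"
      using inv unfolding decomp_inner_inv_def decomp_outer_inv_def decomp by simp
    ultimately show ?thesis using reaches_run[of 1 12 s] by auto
  next
    case more
    have no_merge: "\<not> total w b2 * total p b1 \<le> total w b1 * total p b2"
    proof
      assume "total w b2 * total p b1 \<le> total w b1 * total p b2"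
      then have "length (merge_top p w bs) \<le> length rest + 1"
        using more length_merge_top_le[of p w "(b2 @ b1) # rest"] by simp
      then show False using stop more by simp
    qed
    define t where "t = ireg s 6"
    have stk: "stack_repr t p w bs (imem s) (rmem s)" and h: "ireg s 7 > 1"
      using frame more unfolding decomp_frame_def t_def by auto
    have "\<not> rmem s (t + 3) * rmem s t \<le> rmem s (t - 1) * rmem s (t + 4)"
      using no_merge stack_repr_top_two[OF stk[unfolded more]] by simp
    note run = run_decomp_no_merge[OF pc regs t_def[symmetric] h this]
    have "decomp_outer_inv s0 len base p w i (run prog 12 s)"
      using inv run frame
      unfolding decomp_inner_inv_def decomp_outer_inv_def decomp_frame_def decomp
      by (auto simp: decomp_scratch_def)
    then show ?thesis using reaches_run[of 12 12 s] by auto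
  qed
qed

lemma decomp_inner_loop:
  assumes entry: "decomp_entry s0 len off base p w"
  shows "decomp_inner_inv s0 len base p w i bs s \<Longrightarrow>
    \<exists>s'. reaches s s' (19 * (length bs - length (stack_decomp p w i)) + 12) \<and>
      decomp_outer_inv s0 len base p w i s'"
proof (induction "length bs" arbitrary: bs s rule: less_induct)
  case less
  show ?case
  proof (cases
    "\<exists>b1 b2 rest. bs = b1 # b2 # rest \<and> total w b2 * total p b1 \<le> total w b1 * total p b2")
    case True
    then obtain b1 b2 rest where bs: "bs = b1 # b2 # rest"
      and merge: "total w b2 * total p b1 \<le> total w b1 * total p b2" by blast
    let ?bs' = "(b2 @ b1) # rest"
    have inv: "decomp_inner_inv s0 len base p w i ?bs' (run prog 19 s)"
      using decomp_merge_step[OF entry less.prems[unfolded bs] merge] .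
    then have "length (stack_decomp p w i) \<le> length ?bs'"
      unfolding decomp_inner_inv_def using length_merge_top_le by metis
    moreover obtain s' where
      "reaches (run prog 19 s) s' (19 * (length ?bs' - length (stack_decomp p w i)) + 12)"
      "decomp_outer_inv s0 len base p w i s'"
      using less.hyps[OF _ inv] bs by auto
    ultimately have "reaches s s' (19 + (19 * (length ?bs' - length (stack_decomp p w i)) + 12))"
      "decomp_outer_inv s0 len base p w i s'"
      using reaches_run_trans by blast+
    moreover have "19 + (19 * (length ?bs' - length (stack_decomp p w i)) + 12)
        = 19 * (length bs - length (stack_decomp p w i)) + 12"
      using \<open>length (stack_decomp p w i) \<le> length ?bs'\<close> bs by simp
    ultimately show ?thesis by metis
  next
    case False
    then have "merge_top p w bs = bs" by (cases "(p, w, bs)" rule: merge_top.cases) auto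
    from decomp_inner_exit[OF entry less.prems this] show ?thesis
      using reaches_mono[OF _ le_add2] by blast
  qed
qed

lemma decomp_push_step:
  assumes entry: "decomp_entry s0 len off base p w"
    and inv: "decomp_outer_inv s0 len base p w i s" and i: "i < len"
  shows "decomp_inner_inv s0 len base p w (Suc i) ([i] # stack_decomp p w i) (run prog 13 s)"
proof -
  let ?st = "stack_decomp p w i" and ?s' = "run prog 13 s"
  define t where "t = ireg s 6"
  have frame: "decomp_frame s0 base p w ?st s" and pc: "pc s = 63" and reg3: "ireg s 3 = int i"
    using inv by (simp_all add: decomp_outer_inv_def)
  have h: "ireg s 7 = int (length ?st)" and t: "t = base + 4 - 4 * int (length ?st)"
    and stk: "stack_repr t p w ?st (imem s) (rmem s)"
    and regs: "\<forall>r. r \<notin> decomp_scratch \<longrightarrow> ireg s r = ireg s0 r"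
    and mem: "\<forall>x. \<not> stack_cell base x \<longrightarrow> imem s x = imem s0 x \<and> rmem s x = rmem s0 x"
    using frame unfolding decomp_frame_def t_def by auto
  have input: "0 \<le> off" "base \<le> -4"
    "rmem s0 (2 * (off + int i)) = p i" "rmem s0 (2 * (off + int i) + 1) = w i"
    using entry i by (simp_all add: decomp_entry_def)
  then have "\<not> stack_cell base (2 * (off + int i))" "\<not> stack_cell base (2 * (off + int i) + 1)"
    by (auto simp: stack_cell_def)
  then have job: "rmem s (2 * (off + int i)) = p i" "rmem s (2 * (off + int i) + 1) = w i"
    using mem input(3,4) by simp_all
  note run = run_decomp_push[OF pc decomp_frame_regs(1,2)[OF entry frame] reg3
      decomp_frame_regs(3,4)[OF entry frame] t_def[symmetric] h i]
  have addr: "t - 4 = base - 4 * int (length ?st)" "t - 5 = base - 4 * int (length ?st) - 1"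
    using t by simp_all
  have cells: "stack_cell base (t - 4)" "stack_cell base (t - 5)"
    unfolding addr by (simp_all add: stack_cellI)
  have "stack_repr (t - 4) p w ([i] # ?st) (imem ?s') (rmem ?s')"
    using stack_repr_push[OF stk, of i, unfolded length_concat_stack_decomp] run job by simp
  then show ?thesis
    using i run regs mem cells t h length_concat_stack_decomp[of p w i]
    unfolding decomp_inner_inv_def decomp_frame_def
    by (auto simp: decomp_scratch_def)
qed

text \<open>Each block on the stack holds a credit of 19 steps, enough for the one merge that
  may remove it; this amortisation makes the subroutine linear.\<close>
lemma decomp_outer_loop:
  assumes entry: "decomp_entry s0 len off base p w"
  shows "decomp_outer_inv s0 len base p w i s \<Longrightarrow>
    \<exists>s'. reaches s s' (44 * (len - i) + 19 * length (stack_decomp p w i) + 1) \<and> pc s' = 96 \<and>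
      decomp_frame s0 base p w (stack_decomp p w len) s'"
proof (induction "len - i" arbitrary: i s)
  case 0
  then have "i = len" by (simp add: decomp_outer_inv_def)
  with 0 have inv: "pc s = 63" "ireg s 3 = int len"
    and frame: "decomp_frame s0 base p w (stack_decomp p w len) s"
    by (simp_all add: decomp_outer_inv_def)
  have "run prog 1 s = s\<lparr>pc := 96\<rparr>"
    using run_decomp_done[OF inv decomp_frame_regs(3)[OF entry frame]] by simp
  then have "reaches s (s\<lparr>pc := 96\<rparr>) (44 * (len - i) + 19 * length (stack_decomp p w i) + 1)"
    using reaches_run[of 1 _ s] by simp
  then show ?case using frame by auto
next
  case (Suc k)
  let ?bs = "[i] # stack_decomp p w i"
  have i: "i < len" using Suc.hyps(2) by simp
  have inner: "decomp_inner_inv s0 len base p w (Suc i) ?bs (run prog 13 s)"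
    using decomp_push_step[OF entry Suc.prems i] .
  then obtain s1 where s1:
    "reaches (run prog 13 s) s1 (19 * (length ?bs - length (stack_decomp p w (Suc i))) + 12)"
    "decomp_outer_inv s0 len base p w (Suc i) s1"
    using decomp_inner_loop[OF entry] by blast
  obtain s2 where s2:
    "reaches s1 s2 (44 * (len - Suc i) + 19 * length (stack_decomp p w (Suc i)) + 1)"
    "pc s2 = 96" "decomp_frame s0 base p w (stack_decomp p w len) s2"
  proof -
    have "k = len - Suc i" using Suc.hyps(2) by simp
    from Suc.hyps(1)[OF this s1(2)] show ?thesis using that by blast
  qed
  have "length (stack_decomp p w (Suc i)) \<le> length ?bs"
    using length_merge_top_le[of p w ?bs] by simp
  then have "13 + (19 * (length ?bs - length (stack_decomp p w (Suc i))) + 12)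
        + (44 * (len - Suc i) + 19 * length (stack_decomp p w (Suc i)) + 1)
      = 44 * (len - i) + 19 * length (stack_decomp p w i) + 1"
    using i by simp
  then show ?case
    using reaches_trans[OF reaches_run_trans[OF s1(1)] s2(1)] s2(2,3) by metis
qed

lemma decomp_subroutine:
  assumes entry: "decomp_entry s0 len off base p w" and pc: "pc s0 = 60"
  shows "\<exists>s'. reaches s0 s' (44 * len + 4) \<and> pc s' = 96 \<and>
    decomp_frame s0 base p w (stack_decomp p w len) s'"
proof -
  have "ireg s0 2 = 4" "ireg s0 12 = base" using entry by (simp_all add: decomp_entry_def)
  note run = run_decomp_entry[OF pc this]
  have "decomp_outer_inv s0 len base p w 0 (run prog 3 s0)"
    using run by (simp add: decomp_outer_inv_def decomp_frame_def decomp_scratch_def stack_repr_def)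
  from decomp_outer_loop[OF entry this] obtain s' where
    "reaches (run prog 3 s0) s' (44 * len + 1)" "pc s' = 96"
    "decomp_frame s0 base p w (stack_decomp p w len) s'"
    by auto
  then show ?thesis using reaches_run_trans[of 3 s0 s' "44 * len + 1"] by (auto simp: add.commute)
qed

subsection \<open>The merge phase\<close>

definition block_start :: "job_data list \<Rightarrow> nat \<Rightarrow> nat" where
  "block_start c k = length (concat (take k (chain_blocks c)))"

context
  fixes c :: "job_data list"
  assumes pos: "\<forall>j. chain_ptime c j > 0"
begin

lemma nth_chain_blocks:
  "k < length (chain_blocks c) \<Longrightarrow> chain_blocks c ! k = [block_start c k ..< block_start c (Suc k)]"
  unfolding block_start_def using nth_eq_upt_if_concat_eq_upt[OF concat_chain_blocks[OF pos]] .

lemma block_start_le: "block_start c k \<le> length c"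
proof -
  have "length (concat (take k (chain_blocks c))) \<le> length (concat (chain_blocks c))"
    by (metis append_take_drop_id concat_append le_add1 length_append)
  then show ?thesis using concat_chain_blocks[OF pos] unfolding block_start_def by simp
qed

lemma block_start_end: "length (chain_blocks c) \<le> k \<Longrightarrow> block_start c k = length c"
  unfolding block_start_def using concat_chain_blocks[OF pos] by simp

end

lemma block_start_Suc_ge: "block_start c k \<le> block_start c (Suc k)"
  unfolding block_start_def
  by (cases "k < length (chain_blocks c)") (auto simp: take_Suc_conv_app_nth)

lemma length_left_right_blocks:
  "length (left_blocks c1) = length (chain_blocks c1)"
  "length (right_blocks c2) = length (chain_blocks c2)"
  by (simp_all add: left_blocks_def right_blocks_def)

lemma total_left_block:
  assumes "k < length (chain_blocks c1)"
  shows
    "total (job_ptime c1 c2) (left_blocks c1 ! k) = total (chain_ptime c1) (chain_blocks c1 ! k)"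
    "total (weight c1 c2) (left_blocks c1 ! k) = total (chain_weight c1) (chain_blocks c1 ! k)"
  using assms by (simp_all add: left_blocks_def total_map job_ptime_comp)

lemma total_right_block:
  assumes "k < length (chain_blocks c2)"
  shows
    "total (job_ptime c1 c2) (right_blocks c2 ! k) = total (chain_ptime c2) (chain_blocks c2 ! k)"
    "total (weight c1 c2) (right_blocks c2 ! k) = total (chain_weight c2) (chain_blocks c2 ! k)"
  using assms by (simp_all add: right_blocks_def total_map job_ptime_comp)

fun chain_tag :: "nat + nat \<Rightarrow> int" where
  "chain_tag (Inl _) = 0"
| "chain_tag (Inr _) = 1"

fun chain_pos :: "nat + nat \<Rightarrow> nat" where
  "chain_pos (Inl j) = j"
| "chain_pos (Inr j) = j"

definition output_prefix :: "(nat + nat) list \<Rightarrow> nat \<Rightarrow> (int \<Rightarrow> int) \<Rightarrow> bool" where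
  "output_prefix M n mi \<longleftrightarrow>
     (\<forall>k<n. mi (2 + 2 * int k) = chain_tag (M ! k) \<and> mi (3 + 2 * int k) = int (chain_pos (M ! k)))"

lemma output_prefix_Suc:
  assumes "output_prefix M n mi" "M ! n = x"
  shows "output_prefix M (Suc n)
    (mi(2 + 2 * int n := chain_tag x, 2 + 2 * int n + 1 := int (chain_pos x)))"
  using assms unfolding output_prefix_def by (auto simp: less_Suc_eq)

lemma output_seq_eq:
  assumes "output_prefix M (length M) (imem s)"
  shows "output_seq (length M) s = M"
proof (rule nth_equalityI)
  show "length (output_seq (length M) s) = length M" by (simp add: output_seq_def)
  fix k assume "k < length (output_seq (length M) s)"
  then have k: "k < length M" by (simp add: output_seq_def)
  have "imem s (2 + 2 * int k) = chain_tag (M ! k)"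
    "imem s (3 + 2 * int k) = int (chain_pos (M ! k))"
    using assms k unfolding output_prefix_def by auto
  then show "output_seq (length M) s ! k = M ! k"
    using k by (cases "M ! k") (simp_all add: output_seq_def)
qed

abbreviation remaining_merge ::
    "job_data list \<Rightarrow> job_data list \<Rightarrow> nat \<Rightarrow> nat \<Rightarrow> (nat + nat) list" where
  "remaining_merge c1 c2 ka kb \<equiv>
     merge_blocks (job_ptime c1 c2) (weight c1 c2)
       (drop ka (left_blocks c1)) (drop kb (right_blocks c2))"

definition merge_frame :: "job_data list \<Rightarrow> job_data list \<Rightarrow> state \<Rightarrow> bool" where
  "merge_frame c1 c2 s \<longleftrightarrow> ireg s 0 = 0 \<and> ireg s 1 = 1 \<and> ireg s 2 = 4 \<and>
     ireg s 11 = int (length (chain_blocks c1)) \<and> ireg s 21 = int (length (chain_blocks c2)) \<and>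
     stack_repr_bottom (-4) (chain_ptime c1) (chain_weight c1) (chain_blocks c1) (imem s) (rmem s) \<and>
     stack_repr_bottom (-6) (chain_ptime c2) (chain_weight c2) (chain_blocks c2) (imem s) (rmem s)"

definition merge_inv :: "job_data list \<Rightarrow> job_data list \<Rightarrow> nat \<Rightarrow> nat \<Rightarrow> state \<Rightarrow> bool" where
  "merge_inv c1 c2 ka kb s \<longleftrightarrow> merge_frame c1 c2 s \<and> pc s = 21 \<and>
     ka \<le> length (chain_blocks c1) \<and> kb \<le> length (chain_blocks c2) \<and>
     ireg s 13 = int ka \<and> ireg s 14 = int kb \<and>
     ireg s 15 = -4 - 4 * int ka \<and> ireg s 16 = -6 - 4 * int kb \<and>
     ireg s 17 = int (block_start c1 ka) \<and> ireg s 18 = int (block_start c2 kb) \<and>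
     ireg s 19 = 2 + 2 * int (block_start c1 ka + block_start c2 kb) \<and>
     remaining_merge c1 c2 ka kb
       = drop (block_start c1 ka + block_start c2 kb) (merged_schedule c1 c2) \<and>
     output_prefix (merged_schedule c1 c2) (block_start c1 ka + block_start c2 kb) (imem s)"

definition copy_first_inv ::
    "job_data list \<Rightarrow> job_data list \<Rightarrow> nat \<Rightarrow> nat \<Rightarrow> nat \<Rightarrow> state \<Rightarrow> bool" where
  "copy_first_inv c1 c2 ka kb j s \<longleftrightarrow> merge_frame c1 c2 s \<and> pc s = 37 \<and>
     ka < length (chain_blocks c1) \<and> kb \<le> length (chain_blocks c2) \<and>
     ireg s 13 = int ka \<and> ireg s 14 = int kb \<and>
     ireg s 15 = -4 - 4 * int ka \<and> ireg s 16 = -6 - 4 * int kb \<and>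
     ireg s 17 = int j \<and> ireg s 18 = int (block_start c2 kb) \<and>
     ireg s 19 = 2 + 2 * int (j + block_start c2 kb) \<and> ireg s 20 = int (block_start c1 (Suc ka)) \<and>
     block_start c1 ka \<le> j \<and> j \<le> block_start c1 (Suc ka) \<and>
     drop (block_start c1 ka + block_start c2 kb) (merged_schedule c1 c2)
       = left_blocks c1 ! ka @ remaining_merge c1 c2 (Suc ka) kb \<and>
     output_prefix (merged_schedule c1 c2) (j + block_start c2 kb) (imem s)"

definition copy_second_inv ::
    "job_data list \<Rightarrow> job_data list \<Rightarrow> nat \<Rightarrow> nat \<Rightarrow> nat \<Rightarrow> state \<Rightarrow> bool" where
  "copy_second_inv c1 c2 ka kb j s \<longleftrightarrow> merge_frame c1 c2 s \<and> pc s = 49 \<and>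
     ka \<le> length (chain_blocks c1) \<and> kb < length (chain_blocks c2) \<and>
     ireg s 13 = int ka \<and> ireg s 14 = int kb \<and>
     ireg s 15 = -4 - 4 * int ka \<and> ireg s 16 = -6 - 4 * int kb \<and>
     ireg s 17 = int (block_start c1 ka) \<and> ireg s 18 = int j \<and>
     ireg s 19 = 2 + 2 * int (block_start c1 ka + j) \<and> ireg s 20 = int (block_start c2 (Suc kb)) \<and>
     block_start c2 kb \<le> j \<and> j \<le> block_start c2 (Suc kb) \<and>
     drop (block_start c1 ka + block_start c2 kb) (merged_schedule c1 c2)
       = right_blocks c2 ! kb @ remaining_merge c1 c2 ka (Suc kb) \<and>
     output_prefix (merged_schedule c1 c2) (block_start c1 ka + j) (imem s)"

lemma merge_frame_cong:
  assumes "merge_frame c1 c2 s" "\<forall>r\<in>{0, 1, 2, 11, 21}. ireg s' r = ireg s r"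
    "rmem s' = rmem s" "imem s' = imem s"
  shows "merge_frame c1 c2 s'"
  using assms unfolding merge_frame_def by simp

lemma merge_frame_output:
  assumes "merge_frame c1 c2 s" "\<forall>r\<in>{0, 1, 2, 11, 21}. ireg s' r = ireg s r"
    "rmem s' = rmem s" "imem s' = (imem s)(x := u, y := v)" "x \<ge> 0" "y \<ge> 0"
  shows "merge_frame c1 c2 s'"
  using assms stack_repr_bottom_upd[of "-4"] stack_repr_bottom_upd[of "-6"]
  unfolding merge_frame_def by simp

lemma merge_frame_first_stack:
  assumes "merge_frame c1 c2 s" "k < length (chain_blocks c1)"
  shows "imem s (-4 - 4 * int k - 1) = int (block_start c1 (Suc k))"
    "rmem s (-4 - 4 * int k) = total (chain_ptime c1) (chain_blocks c1 ! k)"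
    "rmem s (-4 - 4 * int k - 1) = total (chain_weight c1) (chain_blocks c1 ! k)"
  using assms unfolding merge_frame_def stack_repr_bottom_def block_start_def by simp_all

lemma merge_frame_second_stack:
  assumes "merge_frame c1 c2 s" "k < length (chain_blocks c2)"
  shows "imem s (-6 - 4 * int k - 1) = int (block_start c2 (Suc k))"
    "rmem s (-6 - 4 * int k) = total (chain_ptime c2) (chain_blocks c2 ! k)"
    "rmem s (-6 - 4 * int k - 1) = total (chain_weight c2) (chain_blocks c2 ! k)"
  using assms unfolding merge_frame_def stack_repr_bottom_def block_start_def by simp_all

lemma copy_first_loop:
  assumes pos: "\<forall>j. chain_ptime c1 j > 0"
  shows "copy_first_inv c1 c2 ka kb j s \<Longrightarrow>
    \<exists>s'. reaches s s' (7 * (block_start c1 (Suc ka) - j) + 4) \<and> merge_inv c1 c2 (Suc ka) kb s'"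
proof (induction "block_start c1 (Suc ka) - j" arbitrary: j s)
  case 0
  note inv = "0.prems"[unfolded copy_first_inv_def]
  have frame: "merge_frame c1 c2 s" using inv by blast
  have regs: "ireg s 1 = 1" "ireg s 2 = 4" using frame by (simp_all add: merge_frame_def)
  have "j = block_start c1 (Suc ka)" using inv "0.hyps" by simp
  then have "ireg s 20 \<le> ireg s 17" using inv by simp
  note run = run_output_first_done[OF _ this regs]
  have "left_blocks c1 ! ka = map Inl [block_start c1 ka ..< block_start c1 (Suc ka)]"
    using nth_chain_blocks[OF pos] inv by (simp add: left_blocks_def)
  moreover have "drop (block_start c1 ka + block_start c2 kb) (merged_schedule c1 c2)
      = left_blocks c1 ! ka @ remaining_merge c1 c2 (Suc ka) kb"
    using inv by blast
  ultimately have "drop (block_start c1 (Suc ka) + block_start c2 kb) (merged_schedule c1 c2)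
      = remaining_merge c1 c2 (Suc ka) kb"
    using drop_eq_append_imp_drop by (fastforce simp: block_start_Suc_ge add.commute)
  then have "merge_inv c1 c2 (Suc ka) kb (run prog 4 s)"
    using inv run merge_frame_cong[OF frame, of "run prog 4 s"] \<open>j = _\<close>
    unfolding merge_inv_def by simp
  then show ?case by (meson le_add2 reaches_run)
next
  case (Suc d)
  note inv = Suc.prems[unfolded copy_first_inv_def]
  have frame: "merge_frame c1 c2 s" using inv by blast
  have regs: "ireg s 0 = 0" "ireg s 1 = 1" using frame by (simp_all add: merge_frame_def)
  have j: "j < block_start c1 (Suc ka)" "block_start c1 ka \<le> j" using Suc.hyps(2) inv by simp_all
  then have "\<not> ireg s 20 \<le> ireg s 17" using inv by simp
  note run = run_output_first[OF _ this regs]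
  have blk: "left_blocks c1 ! ka = map Inl [block_start c1 ka ..< block_start c1 (Suc ka)]"
    using nth_chain_blocks[OF pos] inv by (simp add: left_blocks_def)
  have "drop (block_start c1 ka + block_start c2 kb) (merged_schedule c1 c2)
      = left_blocks c1 ! ka @ remaining_merge c1 c2 (Suc ka) kb"
    using inv by blast
  from drop_eq_append_imp_nth[OF this, of "j - block_start c1 ka"]
  have "merged_schedule c1 c2 ! (j + block_start c2 kb) = Inl j"
    using blk j by (simp add: add.commute)
  then have
    "output_prefix (merged_schedule c1 c2) (Suc (j + block_start c2 kb)) (imem (run prog 7 s))"
    using output_prefix_Suc[of "merged_schedule c1 c2" "j + block_start c2 kb" "imem s"] inv run
    by simp
  then have "copy_first_inv c1 c2 ka kb (Suc j) (run prog 7 s)"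
    using inv run j merge_frame_output[OF frame, of "run prog 7 s"] unfolding copy_first_inv_def
    by simp
  moreover have "d = block_start c1 (Suc ka) - Suc j" using Suc.hyps(2) by simp
  ultimately obtain s' where "reaches (run prog 7 s) s' (7 * (block_start c1 (Suc ka) - Suc j) + 4)"
      "merge_inv c1 c2 (Suc ka) kb s'"
    using Suc.hyps(1) by blast
  moreover have
    "7 + (7 * (block_start c1 (Suc ka) - Suc j) + 4) = 7 * (block_start c1 (Suc ka) - j) + 4"
    using j by simp
  ultimately show ?case using reaches_run_trans by metis
qed

lemma copy_second_loop:
  assumes pos: "\<forall>j. chain_ptime c2 j > 0"
  shows "copy_second_inv c1 c2 ka kb j s \<Longrightarrow>
    \<exists>s'. reaches s s' (7 * (block_start c2 (Suc kb) - j) + 4) \<and> merge_inv c1 c2 ka (Suc kb) s'"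
proof (induction "block_start c2 (Suc kb) - j" arbitrary: j s)
  case 0
  note inv = "0.prems"[unfolded copy_second_inv_def]
  have frame: "merge_frame c1 c2 s" using inv by blast
  have regs: "ireg s 1 = 1" "ireg s 2 = 4" using frame by (simp_all add: merge_frame_def)
  have "j = block_start c2 (Suc kb)" using inv "0.hyps" by simp
  then have "ireg s 20 \<le> ireg s 18" using inv by simp
  note run = run_output_second_done[OF _ this regs]
  have "right_blocks c2 ! kb = map Inr [block_start c2 kb ..< block_start c2 (Suc kb)]"
    using nth_chain_blocks[OF pos] inv by (simp add: right_blocks_def)
  moreover have "drop (block_start c1 ka + block_start c2 kb) (merged_schedule c1 c2)
      = right_blocks c2 ! kb @ remaining_merge c1 c2 ka (Suc kb)"
    using inv by blast
  ultimately have "drop (block_start c1 ka + block_start c2 (Suc kb)) (merged_schedule c1 c2)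
      = remaining_merge c1 c2 ka (Suc kb)"
    using drop_eq_append_imp_drop by (fastforce simp: block_start_Suc_ge)
  then have "merge_inv c1 c2 ka (Suc kb) (run prog 4 s)"
    using inv run merge_frame_cong[OF frame, of "run prog 4 s"] \<open>j = _\<close>
    unfolding merge_inv_def by simp
  then show ?case by (meson le_add2 reaches_run)
next
  case (Suc d)
  note inv = Suc.prems[unfolded copy_second_inv_def]
  have frame: "merge_frame c1 c2 s" using inv by blast
  have regs: "ireg s 1 = 1" using frame by (simp_all add: merge_frame_def)
  have j: "j < block_start c2 (Suc kb)" "block_start c2 kb \<le> j" using Suc.hyps(2) inv by simp_all
  then have "\<not> ireg s 20 \<le> ireg s 18" using inv by simp
  note run = run_output_second[OF _ this regs]
  have blk: "right_blocks c2 ! kb = map Inr [block_start c2 kb ..< block_start c2 (Suc kb)]"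
    using nth_chain_blocks[OF pos] inv by (simp add: right_blocks_def)
  have "drop (block_start c1 ka + block_start c2 kb) (merged_schedule c1 c2)
      = right_blocks c2 ! kb @ remaining_merge c1 c2 ka (Suc kb)"
    using inv by blast
  from drop_eq_append_imp_nth[OF this, of "j - block_start c2 kb"]
  have "merged_schedule c1 c2 ! (block_start c1 ka + j) = Inr j"
    using blk j by simp
  then have
    "output_prefix (merged_schedule c1 c2) (Suc (block_start c1 ka + j)) (imem (run prog 7 s))"
    using output_prefix_Suc[of "merged_schedule c1 c2" "block_start c1 ka + j" "imem s"] inv run
    by simp
  then have "copy_second_inv c1 c2 ka kb (Suc j) (run prog 7 s)"
    using inv run j merge_frame_output[OF frame, of "run prog 7 s"] unfolding copy_second_inv_def
    by simp
  moreover have "d = block_start c2 (Suc kb) - Suc j" using Suc.hyps(2) by simp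
  ultimately obtain s' where "reaches (run prog 7 s) s' (7 * (block_start c2 (Suc kb) - Suc j) + 4)"
      "merge_inv c1 c2 ka (Suc kb) s'"
    using Suc.hyps(1) by blast
  moreover have
    "7 + (7 * (block_start c2 (Suc kb) - Suc j) + 4) = 7 * (block_start c2 (Suc kb) - j) + 4"
    using j by simp
  ultimately show ?case using reaches_run_trans by metis
qed

definition first_block_wins :: "job_data list \<Rightarrow> job_data list \<Rightarrow> nat \<Rightarrow> nat \<Rightarrow> bool" where
  "first_block_wins c1 c2 ka kb \<longleftrightarrow>
     total (weight c1 c2) (right_blocks c2 ! kb) * total (job_ptime c1 c2) (left_blocks c1 ! ka)
     \<le> total (weight c1 c2) (left_blocks c1 ! ka) * total (job_ptime c1 c2) (right_blocks c2 ! kb)"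

lemma remaining_merge_first:
  assumes "ka < length (chain_blocks c1)"
    and "kb < length (chain_blocks c2) \<Longrightarrow> first_block_wins c1 c2 ka kb"
  shows "remaining_merge c1 c2 ka kb = left_blocks c1 ! ka @ remaining_merge c1 c2 (Suc ka) kb"
proof -
  have "drop ka (left_blocks c1) = left_blocks c1 ! ka # drop (Suc ka) (left_blocks c1)"
    using assms(1) by (simp add: length_left_right_blocks Cons_nth_drop_Suc)
  moreover have "drop kb (right_blocks c2) = right_blocks c2 ! kb # drop (Suc kb) (right_blocks c2)"
    if "kb < length (chain_blocks c2)"
    using that by (simp add: length_left_right_blocks Cons_nth_drop_Suc)
  ultimately show ?thesis
    using assms by (cases "kb < length (chain_blocks c2)") (simp_all add: first_block_wins_def
      length_left_right_blocks)
qed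

lemma remaining_merge_second:
  assumes "kb < length (chain_blocks c2)"
    and "ka < length (chain_blocks c1) \<Longrightarrow> \<not> first_block_wins c1 c2 ka kb"
  shows "remaining_merge c1 c2 ka kb = right_blocks c2 ! kb @ remaining_merge c1 c2 ka (Suc kb)"
proof -
  have "drop kb (right_blocks c2) = right_blocks c2 ! kb # drop (Suc kb) (right_blocks c2)"
    using assms(1) by (simp add: length_left_right_blocks Cons_nth_drop_Suc)
  moreover have "drop ka (left_blocks c1) = left_blocks c1 ! ka # drop (Suc ka) (left_blocks c1)"
    if "ka < length (chain_blocks c1)"
    using that by (simp add: length_left_right_blocks Cons_nth_drop_Suc)
  ultimately show ?thesis
    using assms by (cases "ka < length (chain_blocks c1)") (simp_all add: first_block_wins_def
      length_left_right_blocks)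
qed

lemma merge_dispatch_first:
  assumes inv: "merge_inv c1 c2 ka kb s" and ka: "ka < length (chain_blocks c1)"
    and wins: "kb < length (chain_blocks c2) \<Longrightarrow> first_block_wins c1 c2 ka kb"
  obtains n where "n \<le> 13" "copy_first_inv c1 c2 ka kb (block_start c1 ka) (run prog n s)"
proof -
  have frame: "merge_frame c1 c2 s" and pc: "pc s = 21" using inv by (simp_all add: merge_inv_def)
  have regs: "ireg s 1 = 1" using frame by (simp add: merge_frame_def)
  have ka': "\<not> ireg s 11 \<le> ireg s 13"
    using inv frame ka by (simp add: merge_inv_def merge_frame_def)
  have stack: "imem s (ireg s 15 - 1) = int (block_start c1 (Suc ka))"
    "rmem s (ireg s 15) = total (job_ptime c1 c2) (left_blocks c1 ! ka)"
    "rmem s (ireg s 15 - 1) = total (weight c1 c2) (left_blocks c1 ! ka)"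
    using merge_frame_first_stack[OF frame ka] total_left_block[OF ka] inv
    by (simp_all add: merge_inv_def)
  obtain n where n: "n \<le> 13" and run: "pc (run prog n s) = 37"
    "\<forall>r. r \<notin> {9, 20} \<longrightarrow> ireg (run prog n s) r = ireg s r"
    "ireg (run prog n s) 20 = imem s (ireg s 15 - 1)"
    "imem (run prog n s) = imem s" "rmem (run prog n s) = rmem s"
  proof (cases "kb < length (chain_blocks c2)")
    case True
    then have kb': "\<not> ireg s 21 \<le> ireg s 14"
      using inv frame by (simp add: merge_inv_def merge_frame_def)
    have "ireg s 16 = -6 - 4 * int kb" using inv by (simp add: merge_inv_def)
    then have
      "rmem s (ireg s 16 - 1) * rmem s (ireg s 15) \<le> rmem s (ireg s 15 - 1) * rmem s (ireg s 16)"
      using wins[OF True] stack(2,3) merge_frame_second_stack(2,3)[OF frame True]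
        total_right_block[OF True]
      by (simp add: first_block_wins_def)
    from run_merge_pick_first[OF pc ka' kb' regs this] show ?thesis by (intro that[of 13]) simp_all
  next
    case False
    then have "ireg s 21 \<le> ireg s 14" using inv frame by (simp add: merge_inv_def merge_frame_def)
    from run_merge_only_first[OF pc ka' this regs] show ?thesis by (intro that[of 4]) simp_all
  qed
  have "copy_first_inv c1 c2 ka kb (block_start c1 ka) (run prog n s)"
    unfolding copy_first_inv_def
  proof (intro conjI)
    show "merge_frame c1 c2 (run prog n s)" using merge_frame_cong[OF frame] run by simp
  qed (use inv ka run stack remaining_merge_first[OF ka wins] block_start_Suc_ge in
        \<open>simp_all add: merge_inv_def\<close>)
  with n show ?thesis by (rule that)
qed

lemma merge_dispatch_second:
  assumes inv: "merge_inv c1 c2 ka kb s" and kb: "kb < length (chain_blocks c2)"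
    and loses: "ka < length (chain_blocks c1) \<Longrightarrow> \<not> first_block_wins c1 c2 ka kb"
  obtains n where "n \<le> 14" "copy_second_inv c1 c2 ka kb (block_start c2 kb) (run prog n s)"
proof -
  have frame: "merge_frame c1 c2 s" and pc: "pc s = 21" using inv by (simp_all add: merge_inv_def)
  have regs: "ireg s 1 = 1" using frame by (simp add: merge_frame_def)
  have kb': "\<not> ireg s 21 \<le> ireg s 14"
    using inv frame kb by (simp add: merge_inv_def merge_frame_def)
  have stack: "imem s (ireg s 16 - 1) = int (block_start c2 (Suc kb))"
    "rmem s (ireg s 16) = total (job_ptime c1 c2) (right_blocks c2 ! kb)"
    "rmem s (ireg s 16 - 1) = total (weight c1 c2) (right_blocks c2 ! kb)"
    using merge_frame_second_stack[OF frame kb] total_right_block[OF kb] inv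
    by (simp_all add: merge_inv_def)
  obtain n where n: "n \<le> 14" and run: "pc (run prog n s) = 49"
    "\<forall>r. r \<notin> {9, 20} \<longrightarrow> ireg (run prog n s) r = ireg s r"
    "ireg (run prog n s) 20 = imem s (ireg s 16 - 1)"
    "imem (run prog n s) = imem s" "rmem (run prog n s) = rmem s"
  proof (cases "ka < length (chain_blocks c1)")
    case True
    then have ka': "\<not> ireg s 11 \<le> ireg s 13"
      using inv frame by (simp add: merge_inv_def merge_frame_def)
    have "ireg s 15 = -4 - 4 * int ka" using inv by (simp add: merge_inv_def)
    then have
      "\<not> rmem s (ireg s 16 - 1) * rmem s (ireg s 15) \<le> rmem s (ireg s 15 - 1) * rmem s (ireg s 16)"
      using loses[OF True] stack(2,3) merge_frame_first_stack(2,3)[OF frame True]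
        total_left_block[OF True]
      by (simp add: first_block_wins_def)
    from run_merge_pick_second[OF pc ka' kb' regs this] show ?thesis by (intro that[of 14]) simp_all
  next
    case False
    then have "ireg s 11 \<le> ireg s 13" using inv frame by (simp add: merge_inv_def merge_frame_def)
    from run_merge_only_second[OF pc this kb' regs] show ?thesis by (intro that[of 5]) simp_all
  qed
  have "copy_second_inv c1 c2 ka kb (block_start c2 kb) (run prog n s)"
    unfolding copy_second_inv_def
  proof (intro conjI)
    show "merge_frame c1 c2 (run prog n s)" using merge_frame_cong[OF frame] run by simp
  qed (use inv kb run stack remaining_merge_second[OF kb loses] block_start_Suc_ge in
        \<open>simp_all add: merge_inv_def\<close>)
  with n show ?thesis by (rule that)
qed

lemma merge_take_first:
  assumes pos: "\<forall>j. chain_ptime c1 j > 0"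
    and inv: "merge_inv c1 c2 ka kb s" and ka: "ka < length (chain_blocks c1)"
    and wins: "kb < length (chain_blocks c2) \<Longrightarrow> first_block_wins c1 c2 ka kb"
  obtains s' where "reaches s s' (7 * (block_start c1 (Suc ka) - block_start c1 ka) + 17)"
    "merge_inv c1 c2 (Suc ka) kb s'"
proof -
  obtain n where n: "n \<le> 13" "copy_first_inv c1 c2 ka kb (block_start c1 ka) (run prog n s)"
    using merge_dispatch_first[OF inv ka wins] by blast
  from copy_first_loop[OF pos n(2)] obtain s' where
    "reaches (run prog n s) s' (7 * (block_start c1 (Suc ka) - block_start c1 ka) + 4)"
    "merge_inv c1 c2 (Suc ka) kb s'" by blast
  moreover have "n + (7 * (block_start c1 (Suc ka) - block_start c1 ka) + 4)
      \<le> 7 * (block_start c1 (Suc ka) - block_start c1 ka) + 17" using n by simp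
  ultimately show ?thesis using that reaches_run_trans reaches_mono by blast
qed

lemma merge_take_second:
  assumes pos: "\<forall>j. chain_ptime c2 j > 0"
    and inv: "merge_inv c1 c2 ka kb s" and kb: "kb < length (chain_blocks c2)"
    and loses: "ka < length (chain_blocks c1) \<Longrightarrow> \<not> first_block_wins c1 c2 ka kb"
  obtains s' where "reaches s s' (7 * (block_start c2 (Suc kb) - block_start c2 kb) + 18)"
    "merge_inv c1 c2 ka (Suc kb) s'"
proof -
  obtain n where n: "n \<le> 14" "copy_second_inv c1 c2 ka kb (block_start c2 kb) (run prog n s)"
    using merge_dispatch_second[OF inv kb loses] by blast
  from copy_second_loop[OF pos n(2)] obtain s' where
    "reaches (run prog n s) s' (7 * (block_start c2 (Suc kb) - block_start c2 kb) + 4)"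
    "merge_inv c1 c2 ka (Suc kb) s'" by blast
  moreover have "n + (7 * (block_start c2 (Suc kb) - block_start c2 kb) + 4)
      \<le> 7 * (block_start c2 (Suc kb) - block_start c2 kb) + 18" using n by simp
  ultimately show ?thesis using that reaches_run_trans reaches_mono by blast
qed

text \<open>Each merged block costs at most 18 steps and each output job 7.\<close>
lemma merge_loop:
  assumes pos: "\<forall>j. chain_ptime c1 j > 0" "\<forall>j. chain_ptime c2 j > 0"
  shows "merge_inv c1 c2 ka kb s \<Longrightarrow>
    \<exists>s'. reaches s s' (18 * ((length (chain_blocks c1) - ka) + (length (chain_blocks c2) - kb))
        + 7 * (length c1 + length c2 - (block_start c1 ka + block_start c2 kb)) + 2) \<and>
      pc s' = 59 \<and> output_prefix (merged_schedule c1 c2) (length c1 + length c2) (imem s')"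
proof (induction "(length (chain_blocks c1) - ka) + (length (chain_blocks c2) - kb)"
    arbitrary: ka kb s rule: less_induct)
  case less
  let ?m = "length (chain_blocks c1)" and ?n = "length (chain_blocks c2)"
  let ?bound = "\<lambda>ka kb. 18 * ((?m - ka) + (?n - kb))
    + 7 * (length c1 + length c2 - (block_start c1 ka + block_start c2 kb)) + 2"
  have le: "block_start c1 (Suc ka) \<le> length c1" "block_start c2 (Suc kb) \<le> length c2"
    "block_start c1 ka \<le> length c1" "block_start c2 kb \<le> length c2"
    using block_start_le pos by blast+
  have mono: "block_start c1 ka \<le> block_start c1 (Suc ka)"
    "block_start c2 kb \<le> block_start c2 (Suc kb)"
    by (rule block_start_Suc_ge)+
  consider (finished) "ka = ?m" "kb = ?n"
    | (first) "ka < ?m" "kb < ?n \<Longrightarrow> first_block_wins c1 c2 ka kb"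
    | (second) "kb < ?n" "ka < ?m \<Longrightarrow> \<not> first_block_wins c1 c2 ka kb"
    using less.prems unfolding merge_inv_def
    by (cases "ka < ?m"; cases "kb < ?n"; cases "first_block_wins c1 c2 ka kb") auto
  then show ?case
  proof cases
    case finished
    then have "ireg s 11 \<le> ireg s 13" "ireg s 21 \<le> ireg s 14"
      using less.prems by (simp_all add: merge_inv_def merge_frame_def)
    then have "run prog 2 s = s\<lparr>pc := 59\<rparr>"
      using run_merge_halt less.prems by (simp add: merge_inv_def)
    moreover have "block_start c1 ka + block_start c2 kb = length c1 + length c2"
      using finished block_start_end pos by simp
    ultimately show ?thesis
      using less.prems reaches_run[of 2 "?bound ka kb" s] by (auto simp: merge_inv_def)
  next
    case first
    obtain s1 where s1: "reaches s s1 (7 * (block_start c1 (Suc ka) - block_start c1 ka) + 17)"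
      "merge_inv c1 c2 (Suc ka) kb s1"
      using merge_take_first[OF pos(1) less.prems first] by blast
    have "(?m - Suc ka) + (?n - kb) < (?m - ka) + (?n - kb)" using first by simp
    then obtain s2 where "reaches s1 s2 (?bound (Suc ka) kb)" "pc s2 = 59"
      "output_prefix (merged_schedule c1 c2) (length c1 + length c2) (imem s2)"
      using less.hyps[OF _ s1(2)] by blast
    moreover have
      "7 * (block_start c1 (Suc ka) - block_start c1 ka) + 17 + ?bound (Suc ka) kb \<le> ?bound ka kb"
      using first le mono by simp
    ultimately show ?thesis using reaches_trans[OF s1(1)] reaches_mono by blast
  next
    case second
    obtain s1 where s1: "reaches s s1 (7 * (block_start c2 (Suc kb) - block_start c2 kb) + 18)"
      "merge_inv c1 c2 ka (Suc kb) s1"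
      using merge_take_second[OF pos(2) less.prems second] by blast
    have "(?m - ka) + (?n - Suc kb) < (?m - ka) + (?n - kb)" using second by simp
    then obtain s2 where "reaches s1 s2 (?bound ka (Suc kb))" "pc s2 = 59"
      "output_prefix (merged_schedule c1 c2) (length c1 + length c2) (imem s2)"
      using less.hyps[OF _ s1(2)] by blast
    moreover have
      "7 * (block_start c2 (Suc kb) - block_start c2 kb) + 18 + ?bound ka (Suc kb) \<le> ?bound ka kb"
      using second le mono by simp
    ultimately show ?thesis using reaches_trans[OF s1(1)] reaches_mono by blast
  qed
qed

lemma init_rmem:
  assumes "j < length (c1 @ c2)"
  shows "rmem (init_state c1 c2) (2 * int j) = fst ((c1 @ c2) ! j)"
    "rmem (init_state c1 c2) (2 * int j + 1) = snd ((c1 @ c2) ! j)"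
proof -
  have "nat (2 * int j) = 2 * j" "nat (2 * int j + 1) = 2 * j + 1" by simp_all
  then show "rmem (init_state c1 c2) (2 * int j) = fst ((c1 @ c2) ! j)"
    "rmem (init_state c1 c2) (2 * int j + 1) = snd ((c1 @ c2) ! j)"
    using assms unfolding init_state_def by (simp_all only: state.simps) simp_all
qed

lemma decomp_first_chain:
  assumes valid: "valid_instance c1 c2"
  obtains s where "reaches (init_state c1 c2) s (44 * length c1 + 11)" "pc s = 96"
    "decomp_frame (run prog 7 (init_state c1 c2)) (-4) (chain_ptime c1) (chain_weight c1)
       (stack_decomp (chain_ptime c1) (chain_weight c1) (length c1)) s"
proof -
  let ?s0 = "init_state c1 c2"
  have "pc ?s0 = 0" "ireg ?s0 0 = 0" by (simp_all add: init_state_def)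
  note run = run_init[OF this]
  have "decomp_entry (run prog 7 ?s0) (length c1) 0 (-4) (chain_ptime c1) (chain_weight c1)"
    unfolding decomp_entry_def
  proof (intro conjI allI impI)
    fix j assume "j < length c1"
    then show "rmem (run prog 7 ?s0) (2 * (0 + int j)) = chain_ptime c1 j"
      "rmem (run prog 7 ?s0) (2 * (0 + int j) + 1) = chain_weight c1 j"
      using init_rmem[of j c1 c2] run by (simp_all add: nth_append chain_ptime_def chain_weight_def)
  qed (use run in \<open>simp_all add: init_state_def\<close>)
  from decomp_subroutine[OF this run(1)] obtain s where
    "reaches (run prog 7 ?s0) s (44 * length c1 + 4)" "pc s = 96"
    "decomp_frame (run prog 7 ?s0) (-4) (chain_ptime c1) (chain_weight c1)
       (stack_decomp (chain_ptime c1) (chain_weight c1) (length c1)) s"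
    by blast
  moreover from this(1) have "reaches ?s0 s (7 + (44 * length c1 + 4))" by (rule reaches_run_trans)
  ultimately show ?thesis using that by (simp add: add.commute)
qed

definition both_stacks_built :: "job_data list \<Rightarrow> job_data list \<Rightarrow> state \<Rightarrow> bool" where
  "both_stacks_built c1 c2 s \<longleftrightarrow> pc s = 96 \<and>
     ireg s 0 = 0 \<and> ireg s 1 = 1 \<and> ireg s 2 = 4 \<and> ireg s 8 = 1 \<and>
     ireg s 11 = int (length (chain_blocks c1)) \<and> ireg s 7 = int (length (chain_blocks c2)) \<and>
     stack_repr_bottom (-4) (chain_ptime c1) (chain_weight c1) (chain_blocks c1) (imem s) (rmem s) \<and>
     stack_repr_bottom (-6) (chain_ptime c2) (chain_weight c2) (chain_blocks c2) (imem s) (rmem s)"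

lemma decomp_both_chains:
  assumes valid: "valid_instance c1 c2"
  obtains s where "reaches (init_state c1 c2) s (44 * (length c1 + length c2) + 22)"
    "both_stacks_built c1 c2 s"
proof -
  let ?s0 = "init_state c1 c2" and ?a = "length c1" and ?b = "length c2"
  let ?s1 = "run prog 7 ?s0"
  have s0: "pc ?s0 = 0" "ireg ?s0 0 = 0" by (simp_all add: init_state_def)
  note run1 = run_init[OF s0]
  obtain s2 where s2: "reaches ?s0 s2 (44 * ?a + 11)" "pc s2 = 96"
    and frame2: "decomp_frame ?s1 (-4) (chain_ptime c1) (chain_weight c1)
       (stack_decomp (chain_ptime c1) (chain_weight c1) ?a) s2"
    using decomp_first_chain[OF valid] by blast
  have regs2: "ireg s2 0 = 0" "ireg s2 1 = 1" "ireg s2 8 = 0" "ireg s2 4 = int ?a"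
    using frame2 run1 by (simp_all add: decomp_frame_def decomp_scratch_def init_state_def)
  have mem2: "\<forall>x. \<not> stack_cell (-4) x \<longrightarrow> imem s2 x = imem ?s0 x \<and> rmem s2 x = rmem ?s0 x"
    using frame2 run1 by (simp add: decomp_frame_def)
  have bottom1:
    "stack_repr_bottom (-4) (chain_ptime c1) (chain_weight c1) (chain_blocks c1) (imem s2)
      (rmem s2)"
    using stack_repr_bottom_rev[of "-4" "stack_decomp (chain_ptime c1) (chain_weight c1) ?a"] frame2
    unfolding decomp_frame_def chain_blocks_def by auto
  let ?s3 = "s2\<lparr>pc := 7\<rparr>"
  have run2: "run prog 1 s2 = ?s3" using run_return_first[OF s2(2) regs2(3,1)] .
  let ?s4 = "run prog 6 ?s3"
  have "pc ?s3 = 7" "ireg ?s3 0 = 0" "ireg ?s3 1 = 1" using regs2 by simp_all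
  note run3 = run_call_second[OF this]
  have "\<not> stack_cell (-4) 1" by (simp add: stack_cell_def)
  then have "imem s2 1 = int ?b" using mem2 by (simp add: init_state_def)
  have "decomp_entry ?s4 ?b (int ?a) (-6) (chain_ptime c2) (chain_weight c2)"
    unfolding decomp_entry_def
  proof (intro conjI allI impI)
    fix j assume "j < ?b"
    moreover have "\<not> stack_cell (-4) (2 * int (?a + j))" "\<not> stack_cell (-4) (2 * int (?a + j) + 1)"
      by (simp_all add: stack_cell_def)
    ultimately show "rmem ?s4 (2 * (int ?a + int j)) = chain_ptime c2 j"
      "rmem ?s4 (2 * (int ?a + int j) + 1) = chain_weight c2 j"
      using init_rmem[of "?a + j" c1 c2] mem2 run3
      by (simp_all add: nth_append chain_ptime_def chain_weight_def)
  qed (use run3 regs2 \<open>imem s2 1 = int ?b\<close> frame2 run1 in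
        \<open>simp_all add: decomp_frame_def decomp_scratch_def\<close>)
  from decomp_subroutine[OF this run3(1)] obtain s5
    where s5: "reaches ?s4 s5 (44 * ?b + 4)" "pc s5 = 96"
    and frame5: "decomp_frame ?s4 (-6) (chain_ptime c2) (chain_weight c2)
       (stack_decomp (chain_ptime c2) (chain_weight c2) ?b) s5"
    by blast
  have "reaches (run prog 1 s2) s5 (6 + (44 * ?b + 4))"
    using reaches_run_trans[OF s5(1)] run2 by simp
  then have "reaches ?s0 s5 ((44 * ?a + 11) + (1 + (6 + (44 * ?b + 4))))"
    using reaches_trans[OF s2(1) reaches_run_trans] by blast
  moreover have "\<forall>x. \<not> stack_cell (-6) x \<longrightarrow> imem s5 x = imem s2 x \<and> rmem s5 x = rmem s2 x"
    using frame5 run3 by (simp add: decomp_frame_def)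
  then have
    "stack_repr_bottom (-4) (chain_ptime c1) (chain_weight c1) (chain_blocks c1) (imem s5)
      (rmem s5)"
    using not_stack_cell_second_first by (intro stack_repr_bottom_cong[OF bottom1]) simp_all
  moreover have
    "stack_repr_bottom (-6) (chain_ptime c2) (chain_weight c2) (chain_blocks c2) (imem s5)
      (rmem s5)"
    using stack_repr_bottom_rev[of "-6" "stack_decomp (chain_ptime c2) (chain_weight c2) ?b"] frame5
    unfolding decomp_frame_def chain_blocks_def by auto
  moreover have "ireg s5 0 = 0" "ireg s5 1 = 1" "ireg s5 2 = 4" "ireg s5 8 = 1"
    "ireg s5 11 = int (length (chain_blocks c1))" "ireg s5 7 = int (length (chain_blocks c2))"
    using frame5 run3 regs2 frame2 run1
    by (simp_all add: decomp_frame_def decomp_scratch_def chain_blocks_def)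
  ultimately show ?thesis using that s5(2) by (simp add: both_stacks_built_def algebra_simps)
qed

lemma merge_start:
  assumes valid: "valid_instance c1 c2"
  obtains s where "reaches (init_state c1 c2) s (44 * (length c1 + length c2) + 32)"
    "merge_inv c1 c2 0 0 s"
proof -
  obtain s5 where reach5: "reaches (init_state c1 c2) s5 (44 * (length c1 + length c2) + 22)"
    and s5: "both_stacks_built c1 c2 s5"
    using decomp_both_chains[OF valid] by blast
  let ?s6 = "s5\<lparr>pc := 13\<rparr>"
  have "pc s5 = 96" "ireg s5 8 = 1" "ireg s5 0 = 0"
    using s5 by (simp_all add: both_stacks_built_def)
  then have run6: "run prog 2 s5 = ?s6" by (rule run_return_second)
  have "pc ?s6 = 13" "ireg ?s6 0 = 0" using s5 by (simp_all add: both_stacks_built_def)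
  note run7 = run_merge_init[OF this]
  have "merge_inv c1 c2 0 0 (run prog 8 ?s6)"
    unfolding merge_inv_def merge_frame_def
    using run7 s5
    by (simp add: both_stacks_built_def block_start_def merged_schedule_def output_prefix_def)
  moreover have "reaches (run prog 2 s5) (run prog 8 ?s6) 8"
    using reaches_run[of 8 8 ?s6] run6 by simp
  then have "reaches s5 (run prog 8 ?s6) 10" using reaches_run_trans by fastforce
  with reach5 have
    "reaches (init_state c1 c2) (run prog 8 ?s6) (44 * (length c1 + length c2) + 22 + 10)"
    by (rule reaches_trans)
  ultimately show ?thesis using that by (simp add: add.assoc)
qed

theorem prog_run:
  assumes valid: "valid_instance c1 c2"
  obtains t where "t \<le> 70 * (length c1 + length c2) + 70"
    "halted prog (run prog t (init_state c1 c2))"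
    "output_seq (length c1 + length c2) (run prog t (init_state c1 c2)) = merged_schedule c1 c2"
proof -
  let ?n = "length c1 + length c2"
  have pos: "\<forall>j. chain_ptime c1 j > 0" "\<forall>j. chain_ptime c2 j > 0"
    using chain_ptime_pos[OF valid] by auto
  obtain s where s: "reaches (init_state c1 c2) s (44 * ?n + 32)" "merge_inv c1 c2 0 0 s"
    using merge_start[OF valid] by blast
  from merge_loop[OF pos s(2)] obtain s' where
    s': "reaches s s' (18 * (length (chain_blocks c1) + length (chain_blocks c2)) + 7 * ?n + 2)"
      "pc s' = 59" "output_prefix (merged_schedule c1 c2) ?n (imem s')"
    by (auto simp: block_start_def)
  have "length (chain_blocks c1) \<le> length c1" "length (chain_blocks c2) \<le> length c2"
    by (simp_all add: chain_blocks_def length_stack_decomp_le)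
  then have
    "(44 * ?n + 32) + (18 * (length (chain_blocks c1) + length (chain_blocks c2)) + 7 * ?n + 2)
      \<le> 70 * ?n + 70" by simp
  then obtain t where "t \<le> 70 * ?n + 70" "run prog t (init_state c1 c2) = s'"
    using reaches_mono[OF reaches_trans[OF s(1) s'(1)]] unfolding reaches_def by blast
  moreover have "halted prog s'" using s'(2) by (simp add: halted_def prog_nth)
  moreover have "output_seq ?n s' = merged_schedule c1 c2"
    using output_seq_eq s'(3) length_merged_schedule[OF valid] by metis
  ultimately show ?thesis using that by blast
qed

theorem lemma2:
  shows "\<exists>P :: instr list. solves_in_linear_time P"
proof -
  have "solves_in_linear_time prog"
    unfolding solves_in_linear_time_def Let_def
  proof (rule exI[of _ 70], intro allI impI)
    fix c1 c2 assume valid: "valid_instance c1 c2"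
    obtain t where "t \<le> 70 * (length c1 + length c2) + 70"
      "halted prog (run prog t (init_state c1 c2))"
      "output_seq (length c1 + length c2) (run prog t (init_state c1 c2)) = merged_schedule c1 c2"
      using prog_run[OF valid] .
    then show "\<exists>t \<le> 70 * (length c1 + length c2) + 70. halted prog (run prog t (init_state c1 c2)) \<and>
        optimal_seq c1 c2 (output_seq (length c1 + length c2) (run prog t (init_state c1 c2)))"
      using optimal_seq_merged_schedule[OF valid] by auto
  qed
  then show ?thesis ..
qed

end
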